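(* Let $S$ be the multiset consisting of $2$ copies of each odd positive integer together with $2$ additional copies of each odd positive multiple of $11$, and let $T$ be the multiset consisting of $2$ copies of each even positive integer together with $2$ additional copies of each even positive multiple of $11$ (all copies distinct). Let $D_S(N)$ be the number of partitions of $N$ into distinct elements of $S$ having an odd number of parts, and $D_T(N)$ the number of partitions of $N$ into distinct elements of $T$. Then for every $N\ge 3$, $D_S(N)=2D_T(N-3)$.
   Context: A partition of $N$ into distinct elements of a multiset is a finite set of distinct elements of it (different copies of the same integer count as distinct elements) whose values sum to $N$. $D_T(0)=1$. *)

theory Defs
  imports Main
begin

(* A multiset of positive integers with distinguishable copies is modelled as a set of
   pairs (value, copy index): the element (n, c) is the c-th copy of n. *)

definition S_elems :: "(nat \<times> nat) set" where
  "S_elems = {(n, c). n > 0 \<and> odd n \<and> c < (if 11 dvd n then 4 else 2)}"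

definition T_elems :: "(nat \<times> nat) set" where
  "T_elems = {(n, c). n > 0 \<and> even n \<and> c < (if 11 dvd n then 4 else 2)}"

definition distinct_parts :: "(nat \<times> nat) set \<Rightarrow> nat \<Rightarrow> (nat \<times> nat) set set" where
  "distinct_parts M N = {P. P \<subseteq> M \<and> finite P \<and> (\<Sum>x\<in>P. fst x) = N}"

definition D_S :: "nat \<Rightarrow> nat" where
  "D_S N = card {P \<in> distinct_parts S_elems N. odd (card P)}"

definition D_T :: "nat \<Rightarrow> nat" where
  "D_T N = card (distinct_parts T_elems N)"

end

theory Submission
  imports Defs "HOL-Computational_Algebra.Formal_Power_Series"
begin

(* Everything is reduced to an identity of formal power series over \<complex>.
   With F_c = \<Prod>(1 + c q^n) over the parts of S and G = \<Prod>(1 + q^n) over the parts of T,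
   the coefficient of q^N in F_1 - F_(-1) is 2 D_S(N) and that of G is D_T(N), so the
   theorem is the coefficientwise form of   F_1 - F_(-1) - 4 q^3 G = 4 q.
   Since S and T consist of two copies of each odd resp. even n plus two copies of each
   11 n, each of the three products is P(q) P(q^11) for a product P over two copies of the
   odd resp. even numbers.  These are evaluated by a combinatorial Jacobi triple product
   (a charge-raising bijection on sets of signed odd parts), which expresses them as theta
   series times a "balanced" series B.  Specialising it at z = i and z = -1 shows that B is
   the reciprocal of E = \<Prod>n even (1 - q^n), and the degrees 3n \<plusminus> 1 (a = 3, b = 1,
   z = -1) identify E with the pentagonal theta series in q^2.  The remaining
   identity phi(q)phi(q^11) - phi(-q)phi(-q^11) - q^3 psi(q)psi(q^11) = 4 q E(q)E(q^11) is
   proved by counting representations by the binary form a^2 + ab + 3b^2 of discriminant -11.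
   The file develops: dilations q \<mapsto> q^c; infinite products of binomial factors; theta series;
   the triple product; B E = 1 and the pentagonal theorem; the lattice identity; the
   factorisation of the generating functions of S and T; and finally the theorem. *)

unbundle fps_syntax

section \<open>Dilation of formal power series\<close>

definition fps_dilate :: "nat \<Rightarrow> 'a::comm_ring_1 fps \<Rightarrow> 'a fps" where
  "fps_dilate c f = Abs_fps (\<lambda>n. if c dvd n then f $ (n div c) else 0)"

lemma fps_dilate_nth: "fps_dilate c f $ n = (if c dvd n then f $ (n div c) else 0)"
  by (simp add: fps_dilate_def)

(* q \<mapsto> q^1 is the identity (stated with Suc 0, the simplifier's normal form of 1). *)
lemma fps_dilate_1 [simp]: "fps_dilate (Suc 0) f = f"
  by (rule fps_ext) (simp add: fps_dilate_nth)

lemma fps_dilate_add: "fps_dilate c (f + g) = fps_dilate c f + fps_dilate c g"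
  by (rule fps_ext) (simp add: fps_dilate_nth)

lemma fps_dilate_one: "c > 0 \<Longrightarrow> fps_dilate c 1 = 1"
  by (rule fps_ext) (auto simp: fps_dilate_nth)

lemma fps_dilate_const: "c > 0 \<Longrightarrow> fps_dilate c (fps_const a) = fps_const a"
  by (rule fps_ext) (auto simp: fps_dilate_nth)

lemma fps_dilate_X_power: "c > 0 \<Longrightarrow> fps_dilate c (fps_X ^ k) = fps_X ^ (c * k)"
  by (rule fps_ext) (auto simp: fps_dilate_nth)

(* Dilation is a ring homomorphism: only the products f_i g_j with c dividing both
   i and j survive in the coefficient of q^(c m). *)
lemma fps_dilate_mult:
  assumes c: "c > 0"
  shows "fps_dilate c (f * g) = fps_dilate c f * fps_dilate c g"
proof (rule fps_ext)
  fix n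
  define F where "F i = (if c dvd i then f $ (i div c) else 0) *
                        (if c dvd (n - i) then g $ ((n - i) div c) else 0)" for i
  have rhs: "(fps_dilate c f * fps_dilate c g) $ n = (\<Sum>i=0..n. F i)"
    by (simp add: fps_mult_nth fps_dilate_nth F_def)
  show "fps_dilate c (f * g) $ n = (fps_dilate c f * fps_dilate c g) $ n"
  proof (cases "c dvd n")
    case False
    have "F i = 0" if "i \<in> {0..n}" for i
      using False that dvd_add[of c i "n - i"] by (auto simp: F_def)
    then show ?thesis using False rhs by (simp add: fps_dilate_nth)
  next
    case True
    then obtain m where m: "n = c * m" by auto
    have "(\<Sum>i=0..n. F i) = (\<Sum>i\<in>(\<lambda>j. c * j) ` {0..m}. F i)"
      by (rule sum.mono_neutral_right) (use m c in \<open>auto simp: F_def\<close>)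
    also have "\<dots> = (\<Sum>j=0..m. F (c * j))"
      by (subst sum.reindex) (use c in \<open>auto simp: inj_on_def\<close>)
    also have "\<dots> = (\<Sum>j=0..m. f $ j * g $ (m - j))"
    proof (rule sum.cong)
      fix j assume "j \<in> {0..m}"
      then have "n - c * j = c * (m - j)" using m by (simp add: diff_mult_distrib2)
      then show "F (c * j) = f $ j * g $ (m - j)" using c by (simp add: F_def)
    qed simp
    finally show ?thesis using rhs m c by (simp add: fps_dilate_nth fps_mult_nth)
  qed
qed

lemma fps_dilate_prod: "c > 0 \<Longrightarrow> fps_dilate c (\<Prod>x\<in>F. f x) = (\<Prod>x\<in>F. fps_dilate c (f x))"
  by (induction F rule: infinite_finite_induct) (auto simp: fps_dilate_one fps_dilate_mult)

lemma fps_dilate_const_mult: "c > 0 \<Longrightarrow> fps_dilate c (fps_const a * f) = fps_const a * fps_dilate c f"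
  by (simp add: fps_dilate_mult fps_dilate_const)

(* A series with constant term 1 that is invariant under a dilation q \<mapsto> q^c, c \<ge> 2,
   is 1: by strong induction every higher coefficient equals a lower one or vanishes. *)
lemma fps_dilate_fixed_eq_one:
  assumes c: "c \<ge> 2" and F: "fps_dilate c F = F" and F0: "F $ 0 = 1"
  shows "F = (1 :: 'a::comm_ring_1 fps)"
proof -
  have "F $ n = (if n = 0 then 1 else 0)" for n
  proof (induction n rule: less_induct)
    case (less n)
    show ?case
    proof (cases "n = 0")
      case False
      have "F $ n = (if c dvd n then F $ (n div c) else 0)"
        using F by (metis fps_dilate_nth)
      also have "\<dots> = 0"
        using less[of "n div c"] c False by (auto elim!: dvdE)
      finally show ?thesis using False by simp
    qed (use F0 in simp)
  qed
  then show ?thesis by (intro fps_ext) simp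
qed

section \<open>Products of binomial factors\<close>

(* A weighted set of parts: every part u \<in> U carries a positive degree v u, and each
   bound n is respected by only finitely many degrees.  Then the infinite product
   \<Prod>u\<in>U. (1 + w u * q^(v u)) is a well-defined power series. *)
definition admissible :: "'b set \<Rightarrow> ('b \<Rightarrow> nat) \<Rightarrow> bool" where
  "admissible U v \<longleftrightarrow> (\<forall>u\<in>U. 0 < v u) \<and> (\<forall>n. finite {u\<in>U. v u \<le> n})"

definition factor :: "('b \<Rightarrow> 'a::comm_ring_1) \<Rightarrow> ('b \<Rightarrow> nat) \<Rightarrow> 'b \<Rightarrow> 'a fps" where
  "factor w v u = 1 + fps_const (w u) * fps_X ^ v u"

(* The coefficient of q^n of the infinite product only involves the finitely many factors
   of degree at most n. *)
definition gen_prod :: "'b set \<Rightarrow> ('b \<Rightarrow> nat) \<Rightarrow> ('b \<Rightarrow> 'a::comm_ring_1) \<Rightarrow> 'a fps" where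
  "gen_prod U v w = Abs_fps (\<lambda>n. (\<Prod>u\<in>{u\<in>U. v u \<le> n}. factor w v u) $ n)"

definition one_upto :: "nat \<Rightarrow> 'a::comm_ring_1 fps \<Rightarrow> bool" where
  "one_upto n f \<longleftrightarrow> f $ 0 = 1 \<and> (\<forall>j. 0 < j \<and> j \<le> n \<longrightarrow> f $ j = 0)"

lemma one_upto_mult: "one_upto n f \<Longrightarrow> one_upto n g \<Longrightarrow> one_upto n (f * g)"
  unfolding one_upto_def
proof (intro conjI allI impI)
  assume f: "f $ 0 = 1 \<and> (\<forall>j. 0 < j \<and> j \<le> n \<longrightarrow> f $ j = 0)"
     and g: "g $ 0 = 1 \<and> (\<forall>j. 0 < j \<and> j \<le> n \<longrightarrow> g $ j = 0)"
  then show "(f * g) $ 0 = 1" by simp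
  fix j assume j: "0 < j \<and> j \<le> n"
  have "f $ i * g $ (j - i) = 0" if "i \<in> {0..j}" for i
    using f g j that by (cases "i = 0") auto
  then show "(f * g) $ j = 0" by (simp add: fps_mult_nth)
qed

lemma one_upto_factor: "n < v u \<Longrightarrow> one_upto n (factor w v u)"
  by (auto simp: one_upto_def factor_def)

lemma one_upto_prod_factor:
  "(\<And>u. u \<in> F \<Longrightarrow> n < v u) \<Longrightarrow> one_upto n (\<Prod>u\<in>F. factor w v u)"
proof (induction F rule: infinite_finite_induct)
  case (insert x F)
  then show ?case by (simp add: one_upto_mult one_upto_factor)
qed (simp_all add: one_upto_def)

lemma one_upto_mult_nth: "one_upto n g \<Longrightarrow> (f * g) $ n = f $ n"
proof -
  assume g: "one_upto n g"
  have "(f * g) $ n = (\<Sum>i=0..n. f $ i * g $ (n - i))" by (simp add: fps_mult_nth)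
  also have "\<dots> = (\<Sum>i\<in>{n}. f $ i * g $ (n - i))"
    by (rule sum.mono_neutral_right) (use g in \<open>auto simp: one_upto_def\<close>)
  also have "\<dots> = f $ n" using g by (simp add: one_upto_def)
  finally show ?thesis .
qed

lemma gen_prod_nth_finite_prod:
  assumes "finite F" "{u\<in>U. v u \<le> n} \<subseteq> F" "F \<subseteq> U" "admissible U v"
  shows "gen_prod U v w $ n = (\<Prod>u\<in>F. factor w v u) $ n"
proof -
  let ?U = "{u\<in>U. v u \<le> n}"
  have "(\<Prod>u\<in>F. factor w v u) = (\<Prod>u\<in>?U. factor w v u) * (\<Prod>u\<in>F - ?U. factor w v u)"
    using prod.subset_diff[OF assms(2) assms(1), of "factor w v"] by (simp add: mult.commute)
  moreover have "one_upto n (\<Prod>u\<in>F - ?U. factor w v u)"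
    by (rule one_upto_prod_factor) (use assms in auto)
  ultimately show ?thesis by (simp add: gen_prod_def one_upto_mult_nth)
qed

lemma gen_prod_mult_nth_finite_prod:
  assumes "admissible U v" "admissible U' v'"
    "finite F" "{u\<in>U. v u \<le> n} \<subseteq> F" "F \<subseteq> U"
    "finite F'" "{u\<in>U'. v' u \<le> n} \<subseteq> F'" "F' \<subseteq> U'"
  shows "(gen_prod U v w * gen_prod U' v' w') $ n
           = ((\<Prod>u\<in>F. factor w v u) * (\<Prod>u\<in>F'. factor w' v' u)) $ n"
proof -
  have "gen_prod U v w $ i = (\<Prod>u\<in>F. factor w v u) $ i"
       "gen_prod U' v' w' $ (n - i) = (\<Prod>u\<in>F'. factor w' v' u) $ (n - i)" if "i \<le> n" for i
    by (intro gen_prod_nth_finite_prod; use assms that in auto)+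
  then show ?thesis by (simp add: fps_mult_nth)
qed

lemma admissible_finite: "admissible U v \<Longrightarrow> finite {u\<in>U. v u \<le> n}"
  by (simp add: admissible_def)

lemma admissible_Un: "admissible U v \<Longrightarrow> admissible V v \<Longrightarrow> admissible (U \<union> V) v"
  unfolding admissible_def by (auto simp: Collect_disj_eq conj_disj_distribR)

lemma gen_prod_Un:
  assumes "admissible U v" "admissible V v" "U \<inter> V = {}"
  shows "gen_prod (U \<union> V) v w = gen_prod U v w * gen_prod V v w"
proof (rule fps_ext)
  fix n
  let ?U = "{u\<in>U. v u \<le> n}" and ?V = "{u\<in>V. v u \<le> n}"
  have fin: "finite ?U" "finite ?V" using assms by (auto simp: admissible_def)
  have "(gen_prod U v w * gen_prod V v w) $ n
          = ((\<Prod>u\<in>?U. factor w v u) * (\<Prod>u\<in>?V. factor w v u)) $ n"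
    by (rule gen_prod_mult_nth_finite_prod) (use assms fin in auto)
  also have "(\<Prod>u\<in>?U. factor w v u) * (\<Prod>u\<in>?V. factor w v u) = (\<Prod>u\<in>?U \<union> ?V. factor w v u)"
    by (rule prod.union_disjoint[symmetric]) (use fin assms in auto)
  also have "?U \<union> ?V = {u\<in>U \<union> V. v u \<le> n}" by auto
  finally show "gen_prod (U \<union> V) v w $ n = (gen_prod U v w * gen_prod V v w) $ n"
    by (simp add: gen_prod_def)
qed

lemma gen_prod_reindex:
  assumes "bij_betw h U U'" "\<And>u. u \<in> U \<Longrightarrow> v' (h u) = v u" "\<And>u. u \<in> U \<Longrightarrow> w' (h u) = w u"
  shows "gen_prod U' v' w' = gen_prod U v w"
proof (rule fps_ext)
  fix n
  have eq: "{u\<in>U'. v' u \<le> n} = h ` {u\<in>U. v u \<le> n}"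
    using assms bij_betw_imp_surj_on by fastforce
  have inj: "inj_on h {u\<in>U. v u \<le> n}"
    using assms(1) by (auto simp: bij_betw_def inj_on_def)
  have "(\<Prod>u\<in>{u\<in>U'. v' u \<le> n}. factor w' v' u) = (\<Prod>u\<in>{u\<in>U. v u \<le> n}. factor w' v' (h u))"
    unfolding eq by (rule prod.reindex[OF inj, unfolded comp_def])
  also have "\<dots> = (\<Prod>u\<in>{u\<in>U. v u \<le> n}. factor w v u)"
    by (rule prod.cong) (use assms in \<open>auto simp: factor_def\<close>)
  finally show "gen_prod U' v' w' $ n = gen_prod U v w $ n" by (simp add: gen_prod_def)
qed

lemma admissible_reindex:
  assumes h: "bij_betw h U U'" and v: "\<And>u. u \<in> U \<Longrightarrow> v u = v' (h u)" and adm: "admissible U' v'"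
  shows "admissible U v"
  unfolding admissible_def
proof (intro conjI ballI allI)
  fix u assume "u \<in> U"
  then show "0 < v u" using h v adm by (auto simp: admissible_def bij_betw_def)
next
  fix n
  show "finite {u\<in>U. v u \<le> n}"
  proof (rule finite_imageD)
    have "h ` {u\<in>U. v u \<le> n} \<subseteq> {u'\<in>U'. v' u' \<le> n}" using h v by (auto simp: bij_betw_def)
    then show "finite (h ` {u\<in>U. v u \<le> n})" using admissible_finite[OF adm] by (rule finite_subset)
    show "inj_on h {u\<in>U. v u \<le> n}" using h by (auto simp: bij_betw_def inj_on_def)
  qed
qed

lemma gen_prod_cong: "(\<And>u. u \<in> U \<Longrightarrow> w u = w' u) \<Longrightarrow> gen_prod U v w = gen_prod U v w'"
  using gen_prod_reindex[of id U U v v w' w] by simp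

lemma admissible_scale: "admissible U v \<Longrightarrow> c > 0 \<Longrightarrow> admissible U (\<lambda>u. c * v u)"
  unfolding admissible_def
proof (intro conjI ballI allI)
  fix n assume a: "(\<forall>u\<in>U. 0 < v u) \<and> (\<forall>n. finite {u \<in> U. v u \<le> n})" "0 < c"
  have "{u \<in> U. c * v u \<le> n} \<subseteq> {u \<in> U. v u \<le> n}"
  proof
    fix u assume "u \<in> {u \<in> U. c * v u \<le> n}"
    moreover have "v u \<le> c * v u" using a(2) by simp
    ultimately show "u \<in> {u \<in> U. v u \<le> n}" using le_trans by blast
  qed
  then show "finite {u \<in> U. c * v u \<le> n}" using a(1) finite_subset by blast
qed simp_all

lemma gen_prod_scale:
  assumes "admissible U v" "c > 0"
  shows "gen_prod U (\<lambda>u. c * v u) w = fps_dilate c (gen_prod U v w)"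
proof (rule fps_ext)
  fix n
  let ?F = "{u\<in>U. v u \<le> n div c}"
  have fF: "finite ?F" using assms by (simp add: admissible_def)
  have "gen_prod U (\<lambda>u. c * v u) w $ n = (\<Prod>u\<in>?F. factor w (\<lambda>u. c * v u) u) $ n"
  proof (rule gen_prod_nth_finite_prod[OF fF])
    show "{u \<in> U. c * v u \<le> n} \<subseteq> ?F" using assms
      by auto (metis div_le_mono nonzero_mult_div_cancel_left not_less0)
  qed (use assms admissible_scale in auto)
  also have "(\<Prod>u\<in>?F. factor w (\<lambda>u. c * v u) u) = fps_dilate c (\<Prod>u\<in>?F. factor w v u)"
    using assms
    by (simp add: fps_dilate_prod factor_def fps_dilate_add fps_dilate_one fps_dilate_mult
                  fps_dilate_const fps_dilate_X_power)
  also have "fps_dilate c (\<Prod>u\<in>?F. factor w v u) $ n = fps_dilate c (gen_prod U v w) $ n"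
    using gen_prod_nth_finite_prod[OF fF _ _ assms(1), of "n div c" w] by (simp add: fps_dilate_nth)
  finally show "gen_prod U (\<lambda>u. c * v u) w $ n = fps_dilate c (gen_prod U v w) $ n" .
qed

lemma gen_prod_mult_factorwise:
  assumes "admissible U v" "admissible U v'" "\<And>u. u \<in> U \<Longrightarrow> v u \<le> v' u"
    "\<And>u. u \<in> U \<Longrightarrow> factor w1 v u * factor w2 v u = factor w3 v' u"
  shows "gen_prod U v w1 * gen_prod U v w2 = gen_prod U v' w3"
proof (rule fps_ext)
  fix n
  let ?F = "{u\<in>U. v u \<le> n}"
  have fF: "finite ?F" using assms by (simp add: admissible_def)
  have "(gen_prod U v w1 * gen_prod U v w2) $ n
          = ((\<Prod>u\<in>?F. factor w1 v u) * (\<Prod>u\<in>?F. factor w2 v u)) $ n"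
    by (rule gen_prod_mult_nth_finite_prod) (use assms fF in auto)
  also have "(\<Prod>u\<in>?F. factor w1 v u) * (\<Prod>u\<in>?F. factor w2 v u) = (\<Prod>u\<in>?F. factor w3 v' u)"
    by (simp add: prod.distrib[symmetric] assms(4))
  also have "(\<Prod>u\<in>?F. factor w3 v' u) $ n = gen_prod U v' w3 $ n"
  proof (rule gen_prod_nth_finite_prod[symmetric, OF fF])
    show "{u \<in> U. v' u \<le> n} \<subseteq> ?F" using assms(3) le_trans by blast
  qed (use assms in auto)
  finally show "(gen_prod U v w1 * gen_prod U v w2) $ n = gen_prod U v' w3 $ n" .
qed

lemma gen_prod_nth_0: "admissible U v \<Longrightarrow> gen_prod U v w $ 0 = 1"
proof -
  assume "admissible U v"
  then have e: "{u\<in>U. v u = 0} = {}" by (auto simp: admissible_def)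
  show ?thesis unfolding gen_prod_def by (simp add: e)
qed

lemma prod_factor_nth:
  assumes "finite F"
  shows "(\<Prod>u\<in>F. factor w v u) $ n = (\<Sum>P\<in>{P \<in> Pow F. sum v P = n}. prod w P)"
proof -
  have "(\<Prod>u\<in>F. factor w v u) = (\<Prod>u\<in>F. fps_const (w u) * fps_X ^ v u + 1)"
    by (simp add: factor_def add.commute)
  also have "\<dots> = (\<Sum>P\<in>Pow F. (\<Prod>u\<in>P. fps_const (w u) * fps_X ^ v u) * (\<Prod>u\<in>F - P. 1))"
    by (rule prod_add[OF assms])
  also have "\<dots> = (\<Sum>P\<in>Pow F. fps_const (prod w P) * fps_X ^ sum v P)"
  proof (rule sum.cong)
    fix P assume "P \<in> Pow F"
    then have "finite P" using assms finite_subset by auto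
    then have "(\<Prod>u\<in>P. fps_const (w u)) = fps_const (prod w P)"
      by (induction P rule: finite_induct) auto
    then show "(\<Prod>u\<in>P. fps_const (w u) * fps_X ^ v u) * (\<Prod>u\<in>F - P. 1)
                 = fps_const (prod w P) * fps_X ^ sum v P"
      by (simp add: prod.distrib power_sum)
  qed simp
  finally have "(\<Prod>u\<in>F. factor w v u) $ n = (\<Sum>P\<in>Pow F. if sum v P = n then prod w P else 0)"
    by (simp add: fps_sum_nth eq_commute if_distrib cong: if_cong)
  also have "\<dots> = (\<Sum>P\<in>{P \<in> Pow F. sum v P = n}. prod w P)"
    by (rule sum.inter_filter[symmetric]) (simp add: assms)
  finally show ?thesis .
qed

lemma gen_prod_nth:
  assumes "admissible U v"
  shows "gen_prod U v w $ n = (\<Sum>P\<in>{P. P \<subseteq> U \<and> finite P \<and> sum v P = n}. prod w P)"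
proof -
  let ?F = "{u\<in>U. v u \<le> n}"
  have fF: "finite ?F" using assms by (simp add: admissible_def)
  have "gen_prod U v w $ n = (\<Sum>P\<in>{P \<in> Pow ?F. sum v P = n}. prod w P)"
    using gen_prod_nth_finite_prod[OF fF _ _ assms, of n w] prod_factor_nth[OF fF, of w v n] by simp
  also have "{P \<in> Pow ?F. sum v P = n} = {P. P \<subseteq> U \<and> finite P \<and> sum v P = n}"
  proof (intro set_eqI iffI)
    fix P assume "P \<in> {P. P \<subseteq> U \<and> finite P \<and> sum v P = n}"
    then show "P \<in> {P \<in> Pow ?F. sum v P = n}" using member_le_sum[of _ P v] by auto
  qed (use fF finite_subset in auto)
  finally show ?thesis .
qed

section \<open>Theta series\<close>

(* theta a b f = \<Sum>k\<in>\<int>. f k * q^(a k^2 + b k); the exponents are non-negative and each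
   is attained finitely often as soon as a \<ge> 1 and b \<le> 1. *)
definition theta :: "nat \<Rightarrow> nat \<Rightarrow> (int \<Rightarrow> complex) \<Rightarrow> complex fps" where
  "theta a b f = Abs_fps (\<lambda>M. \<Sum>k\<in>{k::int. int a * k^2 + int b * k = int M}. f k)"

lemma theta_nth: "theta a b f $ n = (\<Sum>k\<in>{k. int a * k^2 + int b * k = int n}. f k)"
  by (simp add: theta_def)

lemma abs_le_square: "\<bar>x::int\<bar> \<le> x^2"
proof (cases "x = 0")
  case False
  then have "\<bar>x\<bar> * 1 \<le> \<bar>x\<bar> * \<bar>x\<bar>" by (intro mult_left_mono) simp_all
  then show ?thesis by (simp add: power2_eq_square)
qed simp

lemma theta_exponent_bounds:
  assumes a: "(a::nat) \<ge> 1" and b: "b \<le> 1"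
  shows "\<bar>k\<bar> - 1 \<le> int a * k^2 + int b * (k::int)" and "0 \<le> int a * k^2 + int b * k"
proof -
  have "k^2 \<le> int a * k^2"
    using a by (metis mult_1 mult_right_mono one_of_nat_le_iff zero_le_power2)
  moreover have "- \<bar>k\<bar> \<le> int b * k"
    using b by (cases "b = 0") (auto simp: le_Suc_eq)
  moreover have "\<bar>k\<bar> \<le> k^2" "0 \<le> (\<bar>k\<bar> - 1)^2" by (simp_all add: abs_le_square)
  moreover have "k^2 = \<bar>k\<bar>^2" by simp
  ultimately show "\<bar>k\<bar> - 1 \<le> int a * k^2 + int b * k" and "0 \<le> int a * k^2 + int b * k"
    by (auto simp: power2_eq_square algebra_simps)
qed

lemma theta_exponent_finite:
  assumes "(a::nat) \<ge> 1" "b \<le> 1"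
  shows "finite {k::int. int a * k^2 + int b * k \<le> M}"
proof (rule finite_subset)
  show "{k::int. int a * k^2 + int b * k \<le> M} \<subseteq> {-(\<bar>M\<bar>+1)..\<bar>M\<bar>+1}"
  proof
    fix k assume "k \<in> {k::int. int a * k^2 + int b * k \<le> M}"
    then have "\<bar>k\<bar> - 1 \<le> M" using theta_exponent_bounds(1)[OF assms, of k] by simp
    then show "k \<in> {-(\<bar>M\<bar>+1)..\<bar>M\<bar>+1}" by auto
  qed
qed simp

lemma theta_mult_nth:
  assumes a: "a \<ge> 1" and b: "b \<le> 1"
  shows "(theta a b f * H) $ M =
           (\<Sum>j\<in>{j. int a * j^2 + int b * j \<le> int M}. f j * H $ nat (int M - (int a * j^2 + int b * j)))"
proof -
  let ?A = "\<lambda>i::nat. {k::int. int a * k^2 + int b * k = int i}"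
  have fA: "finite (?A i)" for i
    by (rule finite_subset[OF _ theta_exponent_finite[OF a b, of "int i"]]) auto
  have "(theta a b f * H) $ M = (\<Sum>i=0..M. \<Sum>k\<in>?A i. f k * H $ (M - i))"
    by (simp add: fps_mult_nth theta_nth sum_distrib_right)
  also have "\<dots> = (\<Sum>i=0..M. \<Sum>k\<in>?A i. f k * H $ nat (int M - (int a * k^2 + int b * k)))"
    by (intro sum.cong refl) (auto simp: nat_diff_distrib)
  also have "\<dots> = (\<Sum>k\<in>(\<Union>i\<in>{0..M}. ?A i). f k * H $ nat (int M - (int a * k^2 + int b * k)))"
    by (rule sum.UNION_disjoint[symmetric]) (use fA in auto)
  also have "(\<Union>i\<in>{0..M}. ?A i) = {j. int a * j^2 + int b * j \<le> int M}"
  proof (intro set_eqI iffI)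
    fix j assume j: "j \<in> {j. int a * j^2 + int b * j \<le> int M}"
    define i where "i = nat (int a * j^2 + int b * j)"
    have "int i = int a * j^2 + int b * j"
      using theta_exponent_bounds(2)[OF a b] by (simp add: i_def)
    then show "j \<in> (\<Union>i\<in>{0..M}. ?A i)" using j by (intro UN_I[of i]) auto
  qed auto
  finally show ?thesis .
qed

lemma theta_dilate_nth:
  assumes "c \<ge> 1"
  shows "fps_dilate c (theta a b g) $ n = (\<Sum>k\<in>{k. int c * (int a * k^2 + int b * k) = int n}. g k)"
proof (cases "c dvd n")
  case True
  then obtain m where m: "n = c * m" by blast
  have "{k. int c * (int a * k^2 + int b * k) = int n} = {k. int a * k^2 + int b * k = int m}"
    using m assms by auto
  then show ?thesis using m assms by (simp add: fps_dilate_nth theta_nth)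
next
  case False
  have "\<not> int c * (int a * k^2 + int b * k) = int n" for k
    using False by (metis dvd_triv_left int_dvd_int_iff)
  then show ?thesis using False by (simp add: fps_dilate_nth)
qed

lemma theta_product_nth:
  assumes a1: "a1 \<ge> 1" and b1: "b1 \<le> 1" and a2: "a2 \<ge> 1" and b2: "b2 \<le> 1" and c: "c \<ge> 1"
  shows "(theta a1 b1 f * fps_dilate c (theta a2 b2 g)) $ M =
     (\<Sum>p\<in>{p. int a1 * (fst p)^2 + int b1 * fst p + int c * (int a2 * (snd p)^2 + int b2 * snd p) = int M}.
        f (fst p) * g (snd p))"
proof -
  let ?Q1 = "\<lambda>j. int a1 * j^2 + int b1 * j" and ?Q2 = "\<lambda>k. int a2 * k^2 + int b2 * k"
  let ?J = "{j. ?Q1 j \<le> int M}"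
  let ?K = "\<lambda>j. {k. int c * ?Q2 k = int M - ?Q1 j}"
  have Q2: "0 \<le> ?Q2 k" "?Q2 k \<le> int c * ?Q2 k" for k
    using theta_exponent_bounds(2)[OF a2 b2, of k] c by (simp_all add: mult_le_cancel_right1)
  have fJ: "finite ?J" by (rule theta_exponent_finite[OF a1 b1])
  have fK: "finite (?K j)" for j
  proof (rule finite_subset[OF _ theta_exponent_finite[OF a2 b2, of "\<bar>int M - ?Q1 j\<bar>"]])
    show "?K j \<subseteq> {k. ?Q2 k \<le> \<bar>int M - ?Q1 j\<bar>}"
    proof
      fix k assume "k \<in> ?K j"
      then show "k \<in> {k. ?Q2 k \<le> \<bar>int M - ?Q1 j\<bar>}" using Q2(2)[of k] by auto
    qed
  qed
  have "(theta a1 b1 f * fps_dilate c (theta a2 b2 g)) $ M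
          = (\<Sum>j\<in>?J. f j * fps_dilate c (theta a2 b2 g) $ nat (int M - ?Q1 j))"
    by (rule theta_mult_nth[OF a1 b1])
  also have "\<dots> = (\<Sum>j\<in>?J. \<Sum>k\<in>?K j. f j * g k)"
    by (intro sum.cong refl) (auto simp: theta_dilate_nth[OF c] sum_distrib_left)
  also have "\<dots> = (\<Sum>p\<in>Sigma ?J ?K. f (fst p) * g (snd p))"
    by (subst sum.Sigma) (use fJ fK in \<open>auto simp: case_prod_beta\<close>)
  also have "Sigma ?J ?K = {p. ?Q1 (fst p) + int c * ?Q2 (snd p) = int M}"
  proof (intro set_eqI iffI)
    fix p assume p: "p \<in> {p. ?Q1 (fst p) + int c * ?Q2 (snd p) = int M}"
    have "0 \<le> int c * ?Q2 (snd p)" using Q2(1) by simp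
    then show "p \<in> Sigma ?J ?K" using p by (cases p) auto
  qed auto
  finally show ?thesis by (simp add: algebra_simps)
qed

section \<open>A combinatorial Jacobi triple product\<close>

(* Signed odd parts: (n, 0) is a positive and (n, 1) a negative copy of the odd number n. *)
definition signed_odds :: "(nat \<times> nat) set" where
  "signed_odds = {(n, c). odd n \<and> c < 2}"

definition signed_sets :: "(nat \<times> nat) set set" where
  "signed_sets = {P. P \<subseteq> signed_odds \<and> finite P}"

definition part_sign :: "nat \<times> nat \<Rightarrow> int" where
  "part_sign x = (if snd x = 0 then 1 else -1)"

definition charge :: "(nat \<times> nat) set \<Rightarrow> int" where
  "charge P = (\<Sum>x\<in>P. part_sign x)"

definition weight :: "(nat \<times> nat) set \<Rightarrow> int" where
  "weight P = (\<Sum>x\<in>P. int (fst x))"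

definition charge_count :: "int \<Rightarrow> int \<Rightarrow> nat" where
  "charge_count k N = card {P\<in>signed_sets. charge P = k \<and> weight P = N}"

lemma signed_odds_iff: "x \<in> signed_odds \<longleftrightarrow> odd (fst x) \<and> (snd x = 0 \<or> snd x = 1)"
  by (cases x) (auto simp: signed_odds_def)

lemma signed_sets_iff: "P \<in> signed_sets \<longleftrightarrow> P \<subseteq> signed_odds \<and> finite P"
  by (simp add: signed_sets_def)

lemma charge_weight_insert:
  "finite A \<Longrightarrow> x \<notin> A \<Longrightarrow> charge (insert x A) = charge A + part_sign x \<and> weight (insert x A) = weight A + int (fst x)"
  by (simp add: charge_def weight_def)

lemma weight_nonneg: "weight P \<ge> 0"
  unfolding weight_def by (rule sum_nonneg) auto

lemma weight_ge_part: "P \<in> signed_sets \<Longrightarrow> x \<in> P \<Longrightarrow> int (fst x) \<le> weight P"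
  unfolding weight_def signed_sets_iff by (rule member_le_sum) auto

definition shift :: "nat \<times> nat \<Rightarrow> nat \<times> nat" where
  "shift x = (if snd x = 0 then (fst x + 2, 0) else (fst x - 2, 1))"

definition unshift :: "nat \<times> nat \<Rightarrow> nat \<times> nat" where
  "unshift x = (if snd x = 0 then (fst x - 2, 0) else (fst x + 2, 1))"

lemma shift_props:
  assumes "x \<in> signed_odds - {(1,1)}"
  shows "shift x \<in> signed_odds - {(1,0)}" "unshift (shift x) = x"
    "part_sign (shift x) = part_sign x" "int (fst (shift x)) = int (fst x) + 2 * part_sign x"
proof -
  obtain n c where x: "x = (n, c)" "odd n" "c = 0 \<or> c = 1" "x \<noteq> (1,1)"
    using assms by (cases x) (auto simp: signed_odds_iff)
  then have "c = 1 \<longrightarrow> n \<noteq> 1" by auto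
  then have "c = 1 \<longrightarrow> 3 \<le> n \<and> odd (n - 2)" using x(2) by presburger
  then show "shift x \<in> signed_odds - {(1,0)}" "unshift (shift x) = x"
    "part_sign (shift x) = part_sign x" "int (fst (shift x)) = int (fst x) + 2 * part_sign x"
    using x by (auto simp: signed_odds_iff shift_def unshift_def part_sign_def of_nat_diff)
qed

lemma unshift_props:
  assumes "x \<in> signed_odds - {(1,0)}"
  shows "unshift x \<in> signed_odds - {(1,1)}" "shift (unshift x) = x"
proof -
  obtain n c where x: "x = (n, c)" "odd n" "c = 0 \<or> c = 1" "x \<noteq> (1,0)"
    using assms by (cases x) (auto simp: signed_odds_iff)
  then have "c = 0 \<longrightarrow> n \<noteq> 1" by auto
  then have "c = 0 \<longrightarrow> 3 \<le> n \<and> odd (n - 2)" using x(2) by presburger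
  then show "unshift x \<in> signed_odds - {(1,1)}" "shift (unshift x) = x"
    using x by (auto simp: signed_odds_iff shift_def unshift_def)
qed

lemma shift_image:
  assumes A: "A \<subseteq> signed_odds - {(1,1)}"
  shows "shift ` A \<subseteq> signed_odds - {(1,0)}" "unshift ` shift ` A = A"
    "charge (shift ` A) = charge A" "weight (shift ` A) = weight A + 2 * charge A"
proof -
  have x: "shift x \<in> signed_odds - {(1,0)}" "unshift (shift x) = x"
    "part_sign (shift x) = part_sign x" "int (fst (shift x)) = int (fst x) + 2 * part_sign x"
    if "x \<in> A" for x
    using shift_props[of x] that A by auto
  have inj: "inj_on shift A" by (rule inj_on_inverseI[of _ unshift]) (rule x(2))
  show "shift ` A \<subseteq> signed_odds - {(1,0)}" by (rule image_subsetI) (rule x(1))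
  have "unshift ` shift ` A = (\<lambda>x. x) ` A"
    unfolding image_image by (rule image_cong) (simp_all add: x(2))
  then show "unshift ` shift ` A = A" by simp
  show "charge (shift ` A) = charge A"
    unfolding charge_def sum.reindex[OF inj] by (rule sum.cong) (simp_all add: x(3))
  have "weight (shift ` A) = (\<Sum>x\<in>A. int (fst x) + 2 * part_sign x)"
    unfolding weight_def sum.reindex[OF inj] by (rule sum.cong) (simp_all add: x(4))
  then show "weight (shift ` A) = weight A + 2 * charge A"
    by (simp add: weight_def charge_def sum.distrib sum_distrib_left)
qed

lemma unshift_image:
  assumes A: "A \<subseteq> signed_odds - {(1,0)}"
  shows "unshift ` A \<subseteq> signed_odds - {(1,1)}" "shift ` unshift ` A = A"
proof -
  have x: "unshift x \<in> signed_odds - {(1,1)}" "shift (unshift x) = x" if "x \<in> A" for x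
    using unshift_props[of x] that A by auto
  show "unshift ` A \<subseteq> signed_odds - {(1,1)}" by (rule image_subsetI) (rule x(1))
  have "shift ` unshift ` A = (\<lambda>x. x) ` A"
    unfolding image_image by (rule image_cong) (simp_all add: x(2))
  then show "shift ` unshift ` A = A" by simp
qed

(* Raising the charge: either remove the negative part 1 or add the positive part 1, and
   shift all other parts.  This increases the charge k by 1 and the weight by 2k+1. *)
definition charge_raise :: "(nat \<times> nat) set \<Rightarrow> (nat \<times> nat) set" where
  "charge_raise P = (if (1,1) \<in> P then shift ` (P - {(1,1)}) else insert (1,0) (shift ` P))"

definition charge_lower :: "(nat \<times> nat) set \<Rightarrow> (nat \<times> nat) set" where
  "charge_lower P = (if (1,0) \<in> P then unshift ` (P - {(1,0)}) else insert (1,1) (unshift ` P))"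

lemma charge_raise_props:
  assumes P: "P \<in> signed_sets"
  shows "charge_raise P \<in> signed_sets" "charge_lower (charge_raise P) = P"
    "charge (charge_raise P) = charge P + 1"
    "weight (charge_raise P) = weight P + 2 * charge P + 1"
proof -
  have PO: "P \<subseteq> signed_odds" and fP: "finite P" using P by (auto simp: signed_sets_iff)
  have "charge_raise P \<in> signed_sets \<and> charge_lower (charge_raise P) = P \<and>
        charge (charge_raise P) = charge P + 1 \<and>
        weight (charge_raise P) = weight P + 2 * charge P + 1"
  proof (cases "(1,1) \<in> P")
    case True
    let ?A = "P - {(1,1)}"
    have A: "?A \<subseteq> signed_odds - {(1,1)}" using PO by blast
    note sh = shift_image[OF A]
    have R: "charge_raise P = shift ` ?A" using True by (simp add: charge_raise_def)
    have "P = insert (1,1) ?A" using True by blast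
    then have "charge P = charge ?A - 1" "weight P = weight ?A + 1"
      using charge_weight_insert[of ?A "(1,1)"] fP by (auto simp: part_sign_def)
    moreover have "(1,0) \<notin> shift ` ?A" using sh(1) by auto
    then have "charge_lower (shift ` ?A) = insert (1,1) ?A" using sh(2) by (simp add: charge_lower_def)
    moreover have "finite (shift ` ?A)" using fP by simp
    ultimately show ?thesis using R sh(1,3,4) True by (auto simp: signed_sets_iff)
  next
    case False
    have A: "P \<subseteq> signed_odds - {(1,1)}" using PO False by blast
    note sh = shift_image[OF A]
    have R: "charge_raise P = insert (1,0) (shift ` P)" using False by (simp add: charge_raise_def)
    have n: "(1,0) \<notin> shift ` P" using sh(1) by auto
    then have "charge (charge_raise P) = charge (shift ` P) + 1"
      "weight (charge_raise P) = weight (shift ` P) + 1"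
      unfolding R using charge_weight_insert[of "shift ` P" "(1,0)"] fP by (auto simp: part_sign_def)
    moreover have "insert (1,0) (shift ` P) - {(1,0)} = shift ` P" using n by blast
    then have "charge_lower (charge_raise P) = P" using sh(2) by (simp add: R charge_lower_def)
    moreover have "charge_raise P \<in> signed_sets"
      using R sh(1) fP by (auto simp: signed_sets_iff signed_odds_iff)
    ultimately show ?thesis using sh(3,4) by simp
  qed
  then show "charge_raise P \<in> signed_sets" "charge_lower (charge_raise P) = P"
    "charge (charge_raise P) = charge P + 1"
    "weight (charge_raise P) = weight P + 2 * charge P + 1" by auto
qed

lemma charge_lower_props:
  assumes P: "P \<in> signed_sets"
  shows "charge_lower P \<in> signed_sets" "charge_raise (charge_lower P) = P"
proof -
  have PO: "P \<subseteq> signed_odds" and fP: "finite P" using P by (auto simp: signed_sets_iff)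
  have "charge_lower P \<in> signed_sets \<and> charge_raise (charge_lower P) = P"
  proof (cases "(1,0) \<in> P")
    case True
    let ?A = "P - {(1,0)}"
    have A: "?A \<subseteq> signed_odds - {(1,0)}" using PO by blast
    note sh = unshift_image[OF A]
    have L: "charge_lower P = unshift ` ?A" using True by (simp add: charge_lower_def)
    have "(1,1) \<notin> unshift ` ?A" using sh(1) by auto
    then have "charge_raise (unshift ` ?A) = insert (1,0) ?A" using sh(2) by (simp add: charge_raise_def)
    then show ?thesis using L sh(1) fP True by (auto simp: signed_sets_iff)
  next
    case False
    have A: "P \<subseteq> signed_odds - {(1,0)}" using PO False by blast
    note sh = unshift_image[OF A]
    have L: "charge_lower P = insert (1,1) (unshift ` P)" using False by (simp add: charge_lower_def)
    have "(1,1) \<notin> unshift ` P" using sh(1) by auto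
    then have "insert (1,1) (unshift ` P) - {(1,1)} = unshift ` P" by blast
    then have "charge_raise (charge_lower P) = P" using sh(2) by (simp add: L charge_raise_def)
    moreover have "charge_lower P \<in> signed_sets"
      using L sh(1) fP by (auto simp: signed_sets_iff signed_odds_iff)
    ultimately show ?thesis by simp
  qed
  then show "charge_lower P \<in> signed_sets" "charge_raise (charge_lower P) = P" by auto
qed

lemma charge_count_step: "charge_count (k + 1) (N + 2 * k + 1) = charge_count k N"
proof -
  let ?A = "{P\<in>signed_sets. charge P = k \<and> weight P = N}"
  let ?B = "{P\<in>signed_sets. charge P = k + 1 \<and> weight P = N + 2 * k + 1}"
  have "bij_betw charge_raise ?A ?B"
  proof (rule bij_betw_byWitness[where f' = charge_lower])
    show "\<forall>P\<in>?A. charge_lower (charge_raise P) = P" using charge_raise_props(2) by blast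
    show "\<forall>P\<in>?B. charge_raise (charge_lower P) = P" using charge_lower_props(2) by blast
    show "charge_raise ` ?A \<subseteq> ?B" using charge_raise_props(1,3,4) by force
    show "charge_lower ` ?B \<subseteq> ?A"
    proof
      fix Q assume "Q \<in> charge_lower ` ?B"
      then obtain P where P: "P \<in> ?B" "Q = charge_lower P" by blast
      then have Q: "Q \<in> signed_sets" "charge_raise Q = P" using charge_lower_props by simp_all
      then show "Q \<in> ?A" using charge_raise_props(3,4)[OF Q(1)] P(1) by simp
    qed
  qed
  then show ?thesis unfolding charge_count_def by (rule bij_betw_same_card[symmetric])
qed

lemma charge_count_eq: "charge_count k N = charge_count 0 (N - k^2)"
proof -
  have up: "charge_count (int m) N = charge_count 0 (N - int m ^ 2)" for m N
  proof (induction m arbitrary: N)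
    case (Suc m)
    have "charge_count (int (Suc m)) N
            = charge_count (int m + 1) ((N - 2 * int m - 1) + 2 * int m + 1)"
      by (simp add: add.commute)
    also have "\<dots> = charge_count (int m) (N - 2 * int m - 1)" by (rule charge_count_step)
    finally show ?case using Suc by (simp add: power2_eq_square algebra_simps)
  qed simp
  have down: "charge_count (- int m) N = charge_count 0 (N - int m ^ 2)" for m N
  proof (induction m arbitrary: N)
    case (Suc m)
    have "charge_count (- int (Suc m)) N
            = charge_count (- int (Suc m) + 1) (N + 2 * (- int (Suc m)) + 1)"
      by (rule charge_count_step[symmetric])
    also have "\<dots> = charge_count (- int m) (N - 2 * int m - 1)" by (simp add: algebra_simps)
    finally show ?case using Suc by (simp add: power2_eq_square algebra_simps)
  qed simp
  show ?thesis
  proof (cases "k \<ge> 0")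
    case True
    then show ?thesis using up[of "nat k"] by simp
  next
    case False
    then show ?thesis using down[of "nat (- k)"] by simp
  qed
qed

lemma charge_count_neg: "N < 0 \<Longrightarrow> charge_count k N = 0"
proof -
  assume "N < 0"
  then have e: "{P\<in>signed_sets. charge P = k \<and> weight P = N} = {}"
    using weight_nonneg by (metis (mono_tags, lifting) empty_Collect_eq not_le)
  show ?thesis unfolding charge_count_def e by simp
qed

lemma charge_count_0_0: "charge_count 0 0 = 1"
proof -
  have "{P\<in>signed_sets. charge P = 0 \<and> weight P = 0} = {{}}"
  proof (intro set_eqI iffI)
    fix P assume P: "P \<in> {P\<in>signed_sets. charge P = 0 \<and> weight P = 0}"
    have "x \<notin> P" for x
    proof
      assume x: "x \<in> P"
      then have "odd (fst x)" using P by (auto simp: signed_sets_iff signed_odds_iff)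
      then have "0 < fst x" by (rule odd_pos)
      then show False using weight_ge_part[of P x] x P by simp
    qed
    then show "P \<in> {{}}" by blast
  qed (simp add: signed_sets_iff charge_def weight_def)
  then show ?thesis by (simp add: charge_count_def)
qed

definition level_sets :: "nat \<Rightarrow> nat \<Rightarrow> int \<Rightarrow> (nat \<times> nat) set set" where
  "level_sets a b M = {P\<in>signed_sets. int a * weight P + int b * charge P = M}"

definition part_degree :: "nat \<Rightarrow> nat \<Rightarrow> nat \<times> nat \<Rightarrow> nat" where
  "part_degree a b x = (if snd x = 0 then a * fst x + b else a * fst x - b)"

lemma int_part_degree:
  assumes "x \<in> signed_odds" "a \<ge> 1" "b \<le> 1"
  shows "int (part_degree a b x) = int a * int (fst x) + int b * part_sign x"
proof -
  have "1 \<le> fst x" using assms(1) by (auto simp: signed_odds_iff elim: oddE)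
  then have "b \<le> a * fst x" using assms(2,3) by (metis le_trans nat_mult_1 mult_le_mono)
  then show ?thesis by (auto simp: part_degree_def part_sign_def of_nat_diff)
qed

lemma sum_part_degree:
  assumes "P \<subseteq> signed_odds" "a \<ge> 1" "b \<le> 1"
  shows "int (sum (part_degree a b) P) = int a * weight P + int b * charge P"
proof -
  have "int (sum (part_degree a b) P) = (\<Sum>x\<in>P. int a * int (fst x) + int b * part_sign x)"
    unfolding of_nat_sum by (rule sum.cong) (use assms int_part_degree in auto)
  then show ?thesis by (simp add: weight_def charge_def sum.distrib sum_distrib_left)
qed

lemma part_degree_bounds:
  assumes x: "x \<in> signed_odds" and a: "a \<ge> 1" and b: "b \<le> 1"
  shows "fst x \<le> part_degree a b x + 1" and "b = 0 \<or> a \<ge> 2 \<Longrightarrow> fst x \<le> part_degree a b x"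
proof -
  have f: "1 \<le> fst x" using x by (auto simp: signed_odds_iff elim: oddE)
  have m: "fst x \<le> a * fst x" using a by simp
  show "fst x \<le> part_degree a b x + 1" using m b unfolding part_degree_def by arith
  assume ab: "b = 0 \<or> a \<ge> 2"
  show "fst x \<le> part_degree a b x"
  proof (cases "b = 0")
    case True
    then show ?thesis using m by (simp add: part_degree_def)
  next
    case False
    then have "a \<ge> 2" "b = 1" using ab b by auto
    then have "2 * fst x \<le> a * fst x" using mult_le_mono1 by blast
    then show ?thesis using f \<open>b = 1\<close> unfolding part_degree_def by arith
  qed
qed

lemma admissible_part_degree:
  assumes a: "a \<ge> 1" and b: "b \<le> 1" and ab: "b = 0 \<or> a \<ge> 2"
  shows "admissible signed_odds (part_degree a b)"
  unfolding admissible_def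
proof (intro conjI ballI allI)
  fix u assume u: "u \<in> signed_odds"
  then have "0 < fst u" by (auto simp: signed_odds_iff elim: oddE)
  then show "0 < part_degree a b u" using part_degree_bounds(2)[OF u a b ab] by simp
next
  fix n
  have "{u\<in>signed_odds. part_degree a b u \<le> n} \<subseteq> {0..n+1} \<times> {0..1}"
  proof
    fix u assume u: "u \<in> {u\<in>signed_odds. part_degree a b u \<le> n}"
    then have "fst u \<le> n + 1" using part_degree_bounds(1)[OF _ a b, of u] by auto
    moreover have "snd u \<le> 1" using u signed_odds_iff[of u] by auto
    ultimately show "u \<in> {0..n+1} \<times> {0..1}" by (cases u) auto
  qed
  then show "finite {u\<in>signed_odds. part_degree a b u \<le> n}" by (rule finite_subset) simp
qed

lemma level_sets_eq:
  assumes "a \<ge> 1" "b \<le> 1"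
  shows "level_sets a b (int M) = {P. P \<subseteq> signed_odds \<and> finite P \<and> sum (part_degree a b) P = M}"
proof -
  have "sum (part_degree a b) P = M \<longleftrightarrow> int a * weight P + int b * charge P = int M"
    if "P \<subseteq> signed_odds" for P
  proof -
    have "sum (part_degree a b) P = M \<longleftrightarrow> int (sum (part_degree a b) P) = int M"
      by (rule of_nat_eq_iff[symmetric])
    then show ?thesis by (simp only: sum_part_degree[OF that assms])
  qed
  then show ?thesis by (auto simp: level_sets_def signed_sets_iff)
qed

lemma level_sets_finite:
  assumes "a \<ge> 1" "b \<le> 1"
  shows "finite (level_sets a b (int M))"
proof (rule finite_subset)
  show "level_sets a b (int M) \<subseteq> Pow ({0..M+1} \<times> {0..1})"
  proof
    fix P assume "P \<in> level_sets a b (int M)"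
    then have P: "P \<subseteq> signed_odds" "finite P" "sum (part_degree a b) P = M"
      by (auto simp: level_sets_eq[OF assms])
    have "x \<in> {0..M+1} \<times> {0..1}" if x: "x \<in> P" for x
    proof -
      have "part_degree a b x \<le> M" using P x member_le_sum[of x P "part_degree a b"] by simp
      moreover have "x \<in> signed_odds" using P x by auto
      ultimately show ?thesis
        using part_degree_bounds(1)[OF _ assms, of x] by (cases x) (auto simp: signed_odds_iff)
    qed
    then show "P \<in> Pow ({0..M+1} \<times> {0..1})" by auto
  qed
qed simp

lemma card_level_sets_charge:
  assumes a: "a \<ge> 1"
  shows "card {P\<in>level_sets a b M. charge P = k} =
     (if int a dvd (M - int b * k - int a * k^2)
      then charge_count 0 ((M - int b * k - int a * k^2) div int a) else 0)"
proof (cases "int a dvd (M - int b * k)")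
  case True
  then obtain t where t: "M - int b * k = int a * t" by (auto elim: dvdE)
  have "{P\<in>level_sets a b M. charge P = k} = {P\<in>signed_sets. charge P = k \<and> weight P = t}"
    using t a by (auto simp: level_sets_def algebra_simps)
  then have "card {P\<in>level_sets a b M. charge P = k} = charge_count k t"
    by (simp add: charge_count_def)
  also have "\<dots> = charge_count 0 (t - k^2)" by (rule charge_count_eq)
  finally have "card {P\<in>level_sets a b M. charge P = k} = charge_count 0 (t - k^2)" .
  moreover have "M - int b * k - int a * k^2 = int a * (t - k^2)" using t by (simp add: algebra_simps)
  ultimately show ?thesis using a by simp
next
  case False
  then have "\<not> int a dvd (M - int b * k - int a * k^2)"
    using dvd_add[of "int a" "M - int b * k - int a * k^2" "int a * k^2"] by auto
  moreover have e: "{P\<in>level_sets a b M. charge P = k} = {}"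
    using False by (auto simp: level_sets_def)
  ultimately show ?thesis unfolding e by simp
qed

definition balanced_gf :: "complex fps" where
  "balanced_gf = Abs_fps (\<lambda>N. of_nat (charge_count 0 (int N)))"

lemma balanced_gf_nth_0: "balanced_gf $ 0 = 1"
  by (simp add: balanced_gf_def charge_count_0_0)

lemma level_sets_charge_sum:
  assumes a: "a \<ge> 1" and b: "b \<le> 1"
  shows "(\<Sum>P\<in>level_sets a b (int M). f (charge P)) = (theta a b f * fps_dilate a balanced_gf) $ M"
proof -
  let ?L = "level_sets a b (int M)" and ?Q = "\<lambda>k. int a * k^2 + int b * k"
  let ?J = "{k. ?Q k \<le> int M}"
  define c where "c k = card {P\<in>?L. charge P = k}" for k
  have c: "c k = (if int a dvd (int M - ?Q k) then charge_count 0 ((int M - ?Q k) div int a) else 0)" for k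
    unfolding c_def card_level_sets_charge[OF a] by (simp add: algebra_simps)
  have fL: "finite ?L" by (rule level_sets_finite[OF a b])
  have fJ: "finite ?J" by (rule theta_exponent_finite[OF a b])
  have charge_J: "charge P \<in> ?J" if P: "P \<in> ?L" for P
  proof (rule ccontr)
    assume "charge P \<notin> ?J"
    then have "(int M - ?Q (charge P)) div int a < 0" using a by (simp add: div_neg_pos_less0)
    then have "c (charge P) = 0" by (simp add: c charge_count_neg)
    then show False using P fL by (auto simp: c_def card_eq_0_iff)
  qed
  have c_coeff: "of_nat (c k) = fps_dilate a balanced_gf $ nat (int M - ?Q k)" if "k \<in> ?J" for k
  proof -
    have "int (nat (int M - ?Q k)) = int M - ?Q k" using that by simp
    then have "int a dvd (int M - ?Q k) \<longleftrightarrow> a dvd nat (int M - ?Q k)"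
      "(int M - ?Q k) div int a = int (nat (int M - ?Q k) div a)"
      by (metis int_dvd_int_iff, metis zdiv_int)
    then show ?thesis by (simp add: c fps_dilate_nth balanced_gf_def)
  qed
  have "(\<Sum>P\<in>?L. f (charge P)) = (\<Sum>k\<in>?J. \<Sum>P\<in>{P\<in>?L. charge P = k}. f (charge P))"
    by (rule sum.group[symmetric]) (use fL fJ charge_J in auto)
  also have "\<dots> = (\<Sum>k\<in>?J. f k * of_nat (c k))"
    by (rule sum.cong) (auto simp: c_def)
  also have "\<dots> = (\<Sum>k\<in>?J. f k * fps_dilate a balanced_gf $ nat (int M - ?Q k))"
    by (rule sum.cong) (simp_all add: c_coeff)
  also have "\<dots> = (theta a b f * fps_dilate a balanced_gf) $ M"
    by (rule theta_mult_nth[OF a b, symmetric])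
  finally show ?thesis .
qed

definition charge_weight :: "complex \<Rightarrow> nat \<times> nat \<Rightarrow> complex" where
  "charge_weight z x = (if snd x = 0 then z else inverse z)"

lemma prod_charge_weight: "finite P \<Longrightarrow> z \<noteq> 0 \<Longrightarrow> prod (charge_weight z) P = z powi charge P"
proof (induction P rule: finite_induct)
  case (insert x F)
  then have "z powi charge (insert x F) = z powi charge F * z powi part_sign x"
    by (simp add: charge_def power_int_add)
  also have "z powi part_sign x = charge_weight z x"
    by (simp add: part_sign_def charge_weight_def power_int_minus)
  finally show ?case using insert by simp
qed (simp add: charge_def)

theorem triple_product:
  assumes a: "a \<ge> 1" and b: "b \<le> 1" and ab: "b = 0 \<or> a \<ge> 2" and z: "z \<noteq> 0"
  shows "gen_prod signed_odds (part_degree a b) (charge_weight z)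
           = theta a b (\<lambda>k. z powi k) * fps_dilate a balanced_gf"
proof (rule fps_ext)
  fix M
  have "gen_prod signed_odds (part_degree a b) (charge_weight z) $ M
          = (\<Sum>P\<in>level_sets a b (int M). prod (charge_weight z) P)"
    unfolding gen_prod_nth[OF admissible_part_degree[OF a b ab]] level_sets_eq[OF a b] ..
  also have "\<dots> = (\<Sum>P\<in>level_sets a b (int M). z powi charge P)"
    by (rule sum.cong) (auto simp: level_sets_def signed_sets_iff prod_charge_weight z)
  finally show "gen_prod signed_odds (part_degree a b) (charge_weight z) $ M
                  = (theta a b (\<lambda>k. z powi k) * fps_dilate a balanced_gf) $ M"
    by (simp add: level_sets_charge_sum[OF a b])
qed

lemma part_degree_1_0: "part_degree 1 0 = fst"
  by (rule ext) (simp add: part_degree_def)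

corollary triple_product_1_0:
  assumes "z \<noteq> 0"
  shows "gen_prod signed_odds fst (charge_weight z) = theta 1 0 (\<lambda>k. z powi k) * balanced_gf"
  using triple_product[of 1 0 z, unfolded part_degree_1_0] assms by simp

section \<open>The balanced series is the reciprocal of Euler's product\<close>

definition positives :: "nat set" where "positives = {n. 0 < n}"
definition odds :: "nat set" where "odds = {n. odd n}"
definition evens :: "nat set" where "evens = {n. even n \<and> 0 < n}"

abbreviation mults :: "nat \<Rightarrow> nat set \<Rightarrow> nat set" where
  "mults c U \<equiv> (\<lambda>n. c * n) ` U"

definition set_prod :: "nat set \<Rightarrow> complex \<Rightarrow> complex fps" where
  "set_prod U w = gen_prod U id (\<lambda>_. w)"

lemma admissible_id: "U \<subseteq> positives \<Longrightarrow> admissible U id"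
  unfolding admissible_def positives_def
  by (auto intro: finite_subset[of _ "{0..n}" for n])

lemma mults_positives: "c > 0 \<Longrightarrow> U \<subseteq> positives \<Longrightarrow> mults c U \<subseteq> positives"
  by (auto simp: positives_def)

lemma odds_positives: "odds \<subseteq> positives"
  by (auto simp: odds_def positives_def odd_pos)

lemma evens_positives: "evens \<subseteq> positives"
  by (auto simp: evens_def positives_def)

lemma set_prod_Un:
  "U \<subseteq> positives \<Longrightarrow> V \<subseteq> positives \<Longrightarrow> U \<inter> V = {} \<Longrightarrow> set_prod (U \<union> V) w = set_prod U w * set_prod V w"
  unfolding set_prod_def by (rule gen_prod_Un) (auto intro: admissible_id)

lemma set_prod_scale:
  assumes "U \<subseteq> positives" "c > 0"
  shows "set_prod (mults c U) w = fps_dilate c (set_prod U w)"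
proof -
  have "set_prod (mults c U) w = gen_prod U (\<lambda>n. c * id n) (\<lambda>_. w)"
    unfolding set_prod_def by (rule gen_prod_reindex) (use assms in \<open>auto simp: bij_betw_def inj_on_def\<close>)
  also have "\<dots> = fps_dilate c (set_prod U w)" unfolding set_prod_def
    by (rule gen_prod_scale) (use assms(2) admissible_id[OF assms(1)] in \<open>simp_all add: id_def\<close>)
  finally show ?thesis .
qed

(* (1 + w1 x)(1 + w2 x) = 1 + w1 w2 x^2 when w1 + w2 = 0 *)
lemma set_prod_pair:
  assumes U: "U \<subseteq> positives" and w: "w1 + w2 = 0" "w1 * w2 = w3"
  shows "set_prod U w1 * set_prod U w2 = set_prod (mults 2 U) w3"
proof -
  have "set_prod U w1 * set_prod U w2 = gen_prod U (\<lambda>n. 2 * id n) (\<lambda>_. w3)"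
    unfolding set_prod_def
  proof (rule gen_prod_mult_factorwise)
    show "admissible U id" using U admissible_id by auto
    show "admissible U (\<lambda>n. 2 * id n)" using admissible_scale[OF admissible_id[OF U], of 2] by simp
    fix u assume "u \<in> U"
    have "factor (\<lambda>_. w1) id u * factor (\<lambda>_. w2) id u
        = 1 + fps_const (w1 + w2) * fps_X ^ u + fps_const (w1 * w2) * fps_X ^ (2 * u)"
      by (simp add: factor_def algebra_simps power_add mult_2 mult_2_right flip: fps_const_add fps_const_mult)
    also have "\<dots> = factor (\<lambda>_. w3) (\<lambda>n. 2 * id n) u" using w by (simp add: factor_def)
    finally show "factor (\<lambda>_. w1) id u * factor (\<lambda>_. w2) id u = factor (\<lambda>_. w3) (\<lambda>n. 2 * id n) u" .
  qed auto
  also have "\<dots> = set_prod (mults 2 U) w3"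
    unfolding set_prod_def
    by (rule gen_prod_reindex[symmetric]) (use U in \<open>auto simp: bij_betw_def inj_on_def\<close>)
  finally show ?thesis .
qed

lemma set_prod_nth_0: "U \<subseteq> positives \<Longrightarrow> set_prod U w $ 0 = 1"
  unfolding set_prod_def by (rule gen_prod_nth_0) (rule admissible_id)

lemma odd_triple_product:
  assumes z: "z \<noteq> 0"
  shows "set_prod odds z * set_prod odds (inverse z) = theta 1 0 (\<lambda>k. z powi k) * balanced_gf"
proof -
  have split: "signed_odds = (odds \<times> {0}) \<union> (odds \<times> {1})"
    by (auto simp: signed_odds_def odds_def)
  have single: "gen_prod (odds \<times> {c}) fst (\<lambda>_. w) = set_prod odds w" for c w
    unfolding set_prod_def by (rule gen_prod_reindex[symmetric]) (auto simp: bij_betw_def inj_on_def)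
  have adm: "admissible (odds \<times> {c}) fst" for c
    unfolding admissible_def odds_def
    by (auto intro: odd_pos finite_subset[of _ "{0..n} \<times> {c}" for n])
  have "gen_prod signed_odds fst (charge_weight z)
          = gen_prod (odds \<times> {0}) fst (charge_weight z) * gen_prod (odds \<times> {1}) fst (charge_weight z)"
    unfolding split by (rule gen_prod_Un) (auto simp: adm)
  also have "gen_prod (odds \<times> {0}) fst (charge_weight z) = gen_prod (odds \<times> {0::nat}) fst (\<lambda>_. z)"
    by (rule gen_prod_cong) (auto simp: charge_weight_def)
  also have "gen_prod (odds \<times> {1}) fst (charge_weight z) = gen_prod (odds \<times> {1::nat}) fst (\<lambda>_. inverse z)"
    by (rule gen_prod_cong) (auto simp: charge_weight_def)
  finally show ?thesis using triple_product_1_0[OF z] by (simp only: single)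
qed

definition alt_sign :: "int \<Rightarrow> complex" where
  "alt_sign k = (if even k then 1 else -1)"

lemma neg_one_powi: "(-1::complex) powi k = alt_sign k"
proof (cases "k \<ge> 0")
  case True
  then obtain m where "k = int m" using nonneg_eq_int by blast
  then show ?thesis by (simp add: power_int_def alt_sign_def)
next
  case False
  then obtain m where "k = - int m"
    by (metis add.inverse_inverse neg_0_le_iff_le nonneg_eq_int linorder_le_cases)
  then show ?thesis by (simp add: power_int_minus power_int_def alt_sign_def)
qed

lemma alt_sign_diff: "alt_sign (x - y) = alt_sign x * alt_sign y"
  by (auto simp: alt_sign_def)

lemma i_powi: "\<i> powi k = (if even k then alt_sign (k div 2) else \<i> * alt_sign (k div 2))"
proof -
  have even_pow: "\<i> powi (2 * m) = alt_sign m" for m :: int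
    by (simp add: power_int_mult neg_one_powi)
  show ?thesis
  proof (cases "even k")
    case True
    then show ?thesis using even_pow[of "k div 2"] by simp
  next
    case False
    then have k: "k = 2 * (k div 2) + 1" by presburger
    have "\<i> powi (2 * (k div 2) + 1) = \<i> powi (2 * (k div 2)) * \<i>" by (rule power_int_add_1) simp
    then show ?thesis using False even_pow k by (metis mult.commute)
  qed
qed

(* i^(-k) = -i^k for odd k, so the odd square roots of M contribute nothing. *)
lemma sum_i_powi_odd_roots: "(\<Sum>k\<in>{k::int. k^2 = int M \<and> odd k}. \<i> powi k) = 0"
proof -
  let ?B = "{k::int. k^2 = int M \<and> odd k}"
  have "(\<Sum>k\<in>?B. \<i> powi k) = (\<Sum>k\<in>?B. \<i> powi (- k))"
    by (rule sum.reindex_bij_witness[of _ uminus uminus]) auto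
  also have "\<dots> = - (\<Sum>k\<in>?B. \<i> powi k)"
  proof (subst sum_negf[symmetric], rule sum.cong)
    fix k assume "k \<in> ?B"
    then have "odd k" by simp
    then have "(- k) div 2 = - (k div 2) - 1" by presburger
    moreover have "even (- (k div 2) - 1) \<longleftrightarrow> odd (k div 2)" by presburger
    ultimately show "\<i> powi (- k) = - (\<i> powi k)" using \<open>odd k\<close> by (simp add: i_powi alt_sign_def)
  qed simp
  finally show ?thesis by simp
qed

(* The even square roots k = 2j of M exist only for 4 | M, and i^(2j) = (-1)^j. *)
lemma sum_i_powi_even_roots:
  "(\<Sum>k\<in>{k::int. k^2 = int M \<and> even k}. \<i> powi k) = fps_dilate 4 (theta 1 0 alt_sign) $ M"
proof (cases "4 dvd M")
  case True
  then obtain m where m: "M = 4 * m" by blast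
  have "{k::int. k^2 = int M \<and> even k} = (\<lambda>j. 2 * j) ` {j::int. j^2 = int m}"
  proof (intro set_eqI iffI)
    fix k assume k: "k \<in> {k::int. k^2 = int M \<and> even k}"
    then have "k = 2 * (k div 2)" by simp
    moreover have "(2 * (k div 2))^2 = int M" using k \<open>k = 2 * (k div 2)\<close> by simp
    then have "(k div 2)^2 = int m" using m by (simp add: power_mult_distrib)
    ultimately show "k \<in> (\<lambda>j. 2 * j) ` {j::int. j^2 = int m}" by blast
  qed (use m in \<open>auto simp: power_mult_distrib\<close>)
  then have "(\<Sum>k\<in>{k::int. k^2 = int M \<and> even k}. \<i> powi k) = (\<Sum>j\<in>{j::int. j^2 = int m}. \<i> powi (2 * j))"
    by (simp add: sum.reindex inj_on_def)
  also have "\<dots> = theta 1 0 alt_sign $ m" by (simp add: i_powi theta_nth)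
  finally show ?thesis using m by (simp add: fps_dilate_nth)
next
  case False
  have "\<not> (k^2 = int M \<and> even k)" for k
  proof
    assume h: "k^2 = int M \<and> even k"
    then obtain j where "k = 2 * j" by blast
    then have "int M = 4 * j^2" using h by (simp add: power_mult_distrib)
    then have "4 dvd M" by presburger
    then show False using False by simp
  qed
  then have e: "{k::int. k^2 = int M \<and> even k} = {}" by auto
  show ?thesis unfolding e using False by (simp add: fps_dilate_nth)
qed

lemma theta_i: "theta 1 0 (\<lambda>k. \<i> powi k) = fps_dilate 4 (theta 1 0 alt_sign)"
proof (rule fps_ext)
  fix M
  let ?A = "{k::int. k^2 = int M}"
  have fA: "finite ?A"
    by (rule finite_subset[OF _ theta_exponent_finite[of 1 0 "int M"]]) auto
  have "theta 1 0 (\<lambda>k. \<i> powi k) $ M = (\<Sum>k\<in>{k\<in>?A. even k} \<union> {k\<in>?A. odd k}. \<i> powi k)"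
    unfolding theta_nth by (rule sum.cong) auto
  also have "\<dots> = (\<Sum>k\<in>{k\<in>?A. even k}. \<i> powi k) + (\<Sum>k\<in>{k\<in>?A. odd k}. \<i> powi k)"
    by (rule sum.union_disjoint) (use fA in auto)
  finally show "theta 1 0 (\<lambda>k. \<i> powi k) $ M = fps_dilate 4 (theta 1 0 alt_sign) $ M"
    using sum_i_powi_odd_roots[of M] sum_i_powi_even_roots[of M] by simp
qed

definition euler_even :: "complex fps" where
  "euler_even = set_prod evens (-1)"

lemma euler_even_nth_0: "euler_even $ 0 = 1"
  unfolding euler_even_def by (rule set_prod_nth_0[OF evens_positives])

lemma mults_mults: "mults c (mults d U) = mults (c * d) U"
  by (auto simp: image_image mult.assoc)

lemma positives_split: "positives = odds \<union> evens" and odds_evens_disjoint: "odds \<inter> evens = {}"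
  by (auto simp: positives_def odds_def evens_def odd_pos)

lemma evens_split: "evens = mults 2 odds \<union> mults 4 positives"
proof (intro set_eqI iffI)
  fix x assume "x \<in> evens"
  then have x: "even x" "0 < x" by (auto simp: evens_def)
  show "x \<in> mults 2 odds \<union> mults 4 positives"
  proof (cases "odd (x div 2)")
    case True
    then have "x = 2 * (x div 2)" "x div 2 \<in> odds" using x by (auto simp: odds_def)
    then show ?thesis by blast
  next
    case False
    then have "x = 4 * (x div 4)" "x div 4 \<in> positives" using x by (auto simp: positives_def) presburger+
    then show ?thesis by blast
  qed
qed (auto simp: evens_def odds_def positives_def odd_pos)

(* With W = \<Prod>n\<equiv>2 mod 4 (1 + q^n) * euler_even, both sides below equal
   \<Prod>n\<equiv>4 mod 8 (1 - q^n)^2 * \<Prod>8|n (1 - q^n). *)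
lemma doubling_identity:
  "set_prod (mults 2 odds) 1 * euler_even
     = fps_dilate 4 (set_prod odds (-1) * set_prod odds (-1) * euler_even)"
proof -
  have pos: "odds \<subseteq> positives" "mults 2 odds \<subseteq> positives" "mults 4 positives \<subseteq> positives"
    by (simp_all add: odds_positives mults_positives)
  have "set_prod (mults 2 odds) 1 * euler_even
          = set_prod (mults 2 odds) 1 * set_prod (mults 2 odds) (-1) * set_prod (mults 4 positives) (-1)"
    unfolding euler_even_def evens_split by (subst set_prod_Un) (use pos in \<open>auto simp: odds_def mult.assoc\<close>)
  also have "set_prod (mults 2 odds) 1 * set_prod (mults 2 odds) (-1) = set_prod (mults 4 odds) (-1)"
    using set_prod_pair[of "mults 2 odds" 1 "-1" "-1"] pos by (simp add: mults_mults)
  also have "set_prod (mults 4 odds) (-1) * set_prod (mults 4 positives) (-1)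
               = fps_dilate 4 (set_prod odds (-1) * set_prod positives (-1))"
    by (simp add: set_prod_scale fps_dilate_mult odds_positives)
  also have "set_prod positives (-1) = set_prod odds (-1) * euler_even"
    unfolding euler_even_def positives_split
    by (rule set_prod_Un) (use odds_positives evens_positives odds_evens_disjoint in auto)
  finally show ?thesis by (simp add: mult.assoc)
qed

lemma theta_alt_sign_nth_0: "theta 1 0 alt_sign $ 0 = 1"
  by (simp add: theta_nth alt_sign_def)

(* The odd triple product at z = i and z = -1 turns the doubling identity into
   theta(q^4) * B E = theta(q^4) * (B E)(q^4), so B E is fixed by q \<mapsto> q^4. *)
theorem balanced_gf_euler_even: "balanced_gf * euler_even = 1"
proof -
  let ?\<theta> = "theta 1 0 alt_sign"
  have at_i: "set_prod (mults 2 odds) 1 = fps_dilate 4 ?\<theta> * balanced_gf"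
  proof -
    have "set_prod (mults 2 odds) 1 = set_prod odds \<i> * set_prod odds (inverse \<i>)"
      by (rule set_prod_pair[symmetric]) (simp_all add: odds_positives)
    also have "\<dots> = theta 1 0 (\<lambda>k. \<i> powi k) * balanced_gf" by (rule odd_triple_product) simp
    finally show ?thesis unfolding theta_i .
  qed
  have at_minus_one: "set_prod odds (-1) * set_prod odds (-1) = ?\<theta> * balanced_gf"
    using odd_triple_product[of "-1"] by (simp add: neg_one_powi)
  have "fps_dilate 4 ?\<theta> * (balanced_gf * euler_even)
          = fps_dilate 4 ?\<theta> * fps_dilate 4 (balanced_gf * euler_even)"
    using doubling_identity unfolding at_i at_minus_one by (simp add: fps_dilate_mult mult.assoc)
  moreover have "fps_dilate 4 ?\<theta> \<noteq> 0"
    using theta_alt_sign_nth_0 by (metis fps_dilate_nth dvd_0_right div_0 fps_zero_nth one_neq_zero)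
  ultimately have "fps_dilate 4 (balanced_gf * euler_even) = balanced_gf * euler_even" by simp
  then show ?thesis
    by (intro fps_dilate_fixed_eq_one[of 4]) (simp_all add: balanced_gf_nth_0 euler_even_nth_0)
qed

section \<open>Euler's pentagonal number theorem\<close>

(* The degrees 3n+1 and 3n-1 (n odd) of signed odd parts are exactly the numbers
   congruent to 4 and 2 modulo 6. *)
definition pent_degrees :: "nat set" where
  "pent_degrees = {m. m mod 6 = 2 \<or> m mod 6 = 4}"

definition pent_part :: "nat \<Rightarrow> nat \<times> nat" where
  "pent_part m = (if m mod 6 = 4 then ((m - 1) div 3, 0) else ((m + 1) div 3, 1))"

lemma bij_pent_degrees: "bij_betw (part_degree 3 1) signed_odds pent_degrees"
proof (rule bij_betw_byWitness[where f' = pent_part])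
  have deg: "part_degree 3 1 (2 * t + 1, 0) = 6 * t + 4" "part_degree 3 1 (2 * t + 1, 1) = 6 * t + 2"
    for t by (simp_all add: part_degree_def)
  have mod6: "(6 * t + 4) mod 6 = 4" "(6 * t + 2) mod (6::nat) = 2" for t :: nat by presburger+
  have part: "\<exists>t. x = (2 * t + 1, 0) \<or> x = (2 * t + 1, 1)" if "x \<in> signed_odds" for x
    using that by (cases x) (auto simp: signed_odds_iff elim!: oddE)
  have degree: "\<exists>t. m = 6 * t + 4 \<or> m = 6 * t + 2" if "m \<in> pent_degrees" for m
  proof -
    have "m mod 6 = 2 \<or> m mod 6 = 4" using that by (simp add: pent_degrees_def)
    then show ?thesis by (intro exI[of _ "m div 6"]) presburger
  qed
  show "\<forall>x\<in>signed_odds. pent_part (part_degree 3 1 x) = x"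
  proof
    fix x assume "x \<in> signed_odds"
    then obtain t where "x = (2 * t + 1, 0) \<or> x = (2 * t + 1, 1)" using part by blast
    then show "pent_part (part_degree 3 1 x) = x" using deg mod6 by (auto simp: pent_part_def)
  qed
  show "part_degree 3 1 ` signed_odds \<subseteq> pent_degrees"
  proof
    fix m assume "m \<in> part_degree 3 1 ` signed_odds"
    then obtain t where "m = 6 * t + 4 \<or> m = 6 * t + 2" using part deg by fastforce
    then show "m \<in> pent_degrees" using mod6 by (auto simp: pent_degrees_def)
  qed
  show "\<forall>m\<in>pent_degrees. part_degree 3 1 (pent_part m) = m"
  proof
    fix m assume "m \<in> pent_degrees"
    then obtain t where "m = 6 * t + 4 \<or> m = 6 * t + 2" using degree by blast
    then show "part_degree 3 1 (pent_part m) = m" using mod6 by (auto simp: pent_part_def part_degree_def)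
  qed
  show "pent_part ` pent_degrees \<subseteq> signed_odds"
  proof
    fix x assume "x \<in> pent_part ` pent_degrees"
    then obtain m t where "x = pent_part m" "m = 6 * t + 4 \<or> m = 6 * t + 2" using degree by blast
    then show "x \<in> signed_odds" using mod6 by (auto simp: pent_part_def signed_odds_iff)
  qed
qed

lemma evens_split_mod_6: "evens = pent_degrees \<union> mults 3 evens"
  and pent_degrees_disjoint: "pent_degrees \<inter> mults 3 evens = {}"
proof -
  have "x \<in> evens \<longleftrightarrow> x \<in> pent_degrees \<or> x \<in> mults 3 evens" for x
  proof -
    have "x \<in> mults 3 evens \<longleftrightarrow> (\<exists>y. x = 3 * y \<and> even y \<and> 0 < y)"
      by (auto simp: evens_def)
    also have "\<dots> \<longleftrightarrow> x mod 6 = 0 \<and> 0 < x" by presburger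
    finally have "x \<in> mults 3 evens \<longleftrightarrow> x mod 6 = 0 \<and> 0 < x" .
    moreover have "even x \<and> 0 < x \<longleftrightarrow> (x mod 6 = 2 \<or> x mod 6 = 4) \<or> (x mod 6 = 0 \<and> 0 < x)"
      by presburger
    ultimately show ?thesis by (simp add: evens_def pent_degrees_def)
  qed
  then show "evens = pent_degrees \<union> mults 3 evens" by blast
  show "pent_degrees \<inter> mults 3 evens = {}" by (auto simp: pent_degrees_def evens_def)
qed

theorem euler_even_pentagonal: "euler_even = theta 3 1 alt_sign"
proof -
  have pent_pos: "pent_degrees \<subseteq> positives" by (auto simp: pent_degrees_def positives_def)
  have "set_prod pent_degrees (-1) = gen_prod signed_odds (part_degree 3 1) (\<lambda>_. -1)"
    unfolding set_prod_def by (rule gen_prod_reindex[OF bij_pent_degrees]) auto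
  also have "\<dots> = gen_prod signed_odds (part_degree 3 1) (charge_weight (-1))"
    by (rule gen_prod_cong) (simp add: charge_weight_def)
  also have "\<dots> = theta 3 1 alt_sign * fps_dilate 3 balanced_gf"
    using triple_product[of 3 1 "-1"] by (simp add: neg_one_powi)
  finally have pent: "set_prod pent_degrees (-1) = theta 3 1 alt_sign * fps_dilate 3 balanced_gf" .
  have "euler_even = set_prod pent_degrees (-1) * fps_dilate 3 euler_even"
    unfolding euler_even_def
    by (subst evens_split_mod_6, subst set_prod_Un)
       (use pent_pos mults_positives evens_positives pent_degrees_disjoint set_prod_scale in auto)
  also have "\<dots> = theta 3 1 alt_sign * fps_dilate 3 (balanced_gf * euler_even)"
    unfolding pent by (simp add: fps_dilate_mult mult.assoc)
  finally show ?thesis by (simp add: balanced_gf_euler_even fps_dilate_one)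
qed

section \<open>A theta function identity for the form x^2 + 11 y^2\<close>

(* Representations of M by the form a^2 + a b + 3 b^2 of discriminant -11; the three
   theta products below are all expressed through them. *)
definition norm_reps :: "int \<Rightarrow> (int \<times> int) set" where
  "norm_reps M = {p. (fst p)^2 + fst p * snd p + 3 * (snd p)^2 = M}"

lemma norm_reps_finite: "finite (norm_reps M)"
proof (rule finite_subset)
  show "norm_reps M \<subseteq> {-(3*\<bar>M\<bar>)..3*\<bar>M\<bar>} \<times> {-\<bar>M\<bar>..\<bar>M\<bar>}"
  proof
    fix p assume p: "p \<in> norm_reps M"
    obtain a b where pe: "p = (a, b)" by (cases p)
    have e: "4 * M = (2*a+b)^2 + 11 * b^2"
      using p pe by (simp add: norm_reps_def power2_eq_square algebra_simps)
    have "b^2 \<le> M" "(2*a+b)^2 \<le> 4 * M" using e by (smt (verit) zero_le_power2)+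
    then have "\<bar>b\<bar> \<le> \<bar>M\<bar>" "\<bar>2*a+b\<bar> \<le> 4 * \<bar>M\<bar>"
      using abs_le_square[of b] abs_le_square[of "2*a+b"] by linarith+
    then show "p \<in> {-(3*\<bar>M\<bar>)..3*\<bar>M\<bar>} \<times> {-\<bar>M\<bar>..\<bar>M\<bar>}" using pe by auto
  qed
qed simp

(* (a, b) \<mapsto> (a + b, -b) swaps the parity of a when b is odd. *)
lemma norm_reps_odd_b:
  "(\<Sum>p\<in>norm_reps M. (if odd (snd p) \<and> even (fst p) then 1 else 0::complex))
     = (\<Sum>p\<in>norm_reps M. (if odd (snd p) \<and> odd (fst p) then 1 else 0))"
proof (rule sum.reindex_bij_witness[of _ "\<lambda>p. (fst p + snd p, - snd p)" "\<lambda>p. (fst p + snd p, - snd p)"])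
qed (auto simp: norm_reps_def power2_eq_square algebra_simps)

(* (a, b) \<mapsto> (-a, -b) exchanges a \<equiv> 1 and a \<equiv> 5 modulo 6. *)
lemma norm_reps_mod_6:
  "(\<Sum>p\<in>norm_reps M. (if fst p mod 6 = 1 then alt_sign (snd p) else 0))
     = (\<Sum>p\<in>norm_reps M. (if fst p mod 6 = 5 then alt_sign (snd p) else 0))"
proof (rule sum.reindex_bij_witness[of _ "\<lambda>p. (- fst p, - snd p)" "\<lambda>p. (- fst p, - snd p)"])
  fix p :: "int \<times> int"
  have "(- fst p) mod 6 = 5 \<longleftrightarrow> fst p mod 6 = 1" by presburger
  then show "(if fst (- fst p, - snd p) mod 6 = 5 then alt_sign (snd (- fst p, - snd p)) else 0) =
             (if fst p mod 6 = 1 then alt_sign (snd p) else 0)"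
    by (simp add: alt_sign_def)
qed (auto simp: norm_reps_def power2_eq_square algebra_simps)

(* For a = 3c with c odd, (a, b) \<mapsto> (-a, b + c) is a sign-reversing involution. *)
lemma norm_reps_mod_3:
  "(\<Sum>p\<in>norm_reps M. (if odd (fst p) \<and> 3 dvd fst p then alt_sign (snd p) else 0)) = 0"
proof -
  let ?S = "{p\<in>norm_reps M. odd (fst p) \<and> 3 dvd fst p}"
  define \<iota> where "\<iota> p = (- fst p, snd p + fst p div 3)" for p :: "int \<times> int"
  have inv: "\<iota> p \<in> ?S \<and> \<iota> (\<iota> p) = p \<and> alt_sign (snd (\<iota> p)) = - alt_sign (snd p)" if p: "p \<in> ?S" for p
  proof -
    obtain c b where pe: "p = (3 * c, b)" and c: "odd c" using p by (cases p) (auto elim!: dvdE)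
    have "\<iota> p = (3 * (- c), b + c)" "\<iota> (3 * (- c), b + c) = p" using pe by (simp_all add: \<iota>_def)
    then show ?thesis
      using p pe c by (simp add: norm_reps_def alt_sign_def power2_eq_square algebra_simps)
  qed
  have "(\<Sum>p\<in>?S. alt_sign (snd p)) = (\<Sum>p\<in>?S. - alt_sign (snd p))"
    by (rule sum.reindex_bij_witness[of _ \<iota> \<iota>]) (use inv in auto)
  then have "(\<Sum>p\<in>?S. alt_sign (snd p)) = 0" by (simp add: sum_negf)
  then show ?thesis by (simp add: sum.inter_filter[OF norm_reps_finite, symmetric])
qed

lemma norm_reps_identity:
  "(\<Sum>p\<in>norm_reps M. (if even (snd p) then 1 - alt_sign (fst p) else 0))
     - (\<Sum>p\<in>norm_reps M. (if odd (snd p) then 1 else 0))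
   = 4 * (\<Sum>p\<in>norm_reps M. (if fst p mod 6 = 1 then alt_sign (snd p) else 0))"
proof -
  have pointwise: "(if even (snd p) then 1 - alt_sign (fst p) else 0)
      - (if odd (snd p) then 1 else 0)
      - 4 * (if fst p mod 6 = 1 then alt_sign (snd p) else 0)
    = ((if odd (snd p) \<and> odd (fst p) then 1 else 0) - (if odd (snd p) \<and> even (fst p) then 1 else 0))
      + 2 * ((if fst p mod 6 = 5 then alt_sign (snd p) else 0) - (if fst p mod 6 = 1 then alt_sign (snd p) else 0))
      + 2 * (if odd (fst p) \<and> 3 dvd fst p then alt_sign (snd p) else 0)" for p :: "int \<times> int"
  proof -
    obtain a b where pe: "p = (a, b)" by (cases p)
    have "odd a \<Longrightarrow> a mod 6 = 1 \<or> a mod 6 = 3 \<or> a mod 6 = 5"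
      "odd a \<Longrightarrow> 3 dvd a \<longleftrightarrow> a mod 6 = 3"
      "even a \<Longrightarrow> a mod 6 \<noteq> 1 \<and> a mod 6 \<noteq> 5" by presburger+
    then show ?thesis using pe by (cases "even a") (auto simp: alt_sign_def)
  qed
  have "(\<Sum>p\<in>norm_reps M. (if even (snd p) then 1 - alt_sign (fst p) else 0))
          - (\<Sum>p\<in>norm_reps M. (if odd (snd p) then 1 else 0))
          - 4 * (\<Sum>p\<in>norm_reps M. (if fst p mod 6 = 1 then alt_sign (snd p) else 0))
        = (\<Sum>p\<in>norm_reps M. ((if odd (snd p) \<and> odd (fst p) then 1 else 0)
                                 - (if odd (snd p) \<and> even (fst p) then 1 else 0))
            + 2 * ((if fst p mod 6 = 5 then alt_sign (snd p) else 0)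
                   - (if fst p mod 6 = 1 then alt_sign (snd p) else 0))
            + 2 * (if odd (fst p) \<and> 3 dvd fst p then alt_sign (snd p) else 0))"
    unfolding pointwise[symmetric] by (simp add: sum_subtractf sum_distrib_left)
  also have "\<dots> = 0"
    using norm_reps_odd_b norm_reps_mod_6 norm_reps_mod_3
    by (simp add: sum.distrib sum_subtractf flip: sum_distrib_left)
  finally show ?thesis by simp
qed

(* phi(q) = \<Sum>k q^(k^2), phi(-q) = \<Sum>k (-1)^k q^(k^2) and psi(q) = \<Sum>k q^(k^2 + k). *)
definition phi_plus :: "complex fps" where "phi_plus = theta 1 0 (\<lambda>_. 1)"
definition phi_minus :: "complex fps" where "phi_minus = theta 1 0 alt_sign"
definition psi_series :: "complex fps" where "psi_series = theta 1 1 (\<lambda>_. 1)"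

(* j^2 + 11 k^2 = a^2 + a b + 3 b^2 for (a, b) = (j - k, 2k). *)
lemma phi_products_nth:
  "(phi_plus * fps_dilate 11 phi_plus - phi_minus * fps_dilate 11 phi_minus) $ M
     = (\<Sum>p\<in>norm_reps (int M). (if even (snd p) then 1 - alt_sign (fst p) else 0))"
proof -
  let ?D = "{p. (fst p)^2 + 11 * (snd p)^2 = int M}"
  have "(phi_plus * fps_dilate 11 phi_plus - phi_minus * fps_dilate 11 phi_minus) $ M
          = (\<Sum>p\<in>?D. 1 - alt_sign (fst p) * alt_sign (snd p))"
    using theta_product_nth[of 1 0 1 0 11 "\<lambda>_. 1" "\<lambda>_. 1" M]
          theta_product_nth[of 1 0 1 0 11 alt_sign alt_sign M]
    by (simp add: phi_plus_def phi_minus_def sum_subtractf)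
  also have "\<dots> = (\<Sum>p\<in>{p\<in>norm_reps (int M). even (snd p)}. 1 - alt_sign (fst p))"
  proof (rule sum.reindex_bij_witness[of _ "\<lambda>q. (fst q + snd q div 2, snd q div 2)"
                                            "\<lambda>p. (fst p - snd p, 2 * snd p)"])
    fix p assume "p \<in> ?D"
    then show "(fst p - snd p, 2 * snd p) \<in> {p\<in>norm_reps (int M). even (snd p)}"
      by (cases p) (simp add: norm_reps_def power2_eq_square algebra_simps)
    show "1 - alt_sign (fst (fst p - snd p, 2 * snd p)) = 1 - alt_sign (fst p) * alt_sign (snd p)"
      by (simp add: alt_sign_diff)
  next
    fix q assume "q \<in> {p\<in>norm_reps (int M). even (snd p)}"
    then show "(fst q + snd q div 2, snd q div 2) \<in> ?D"
      by (cases q) (auto simp: norm_reps_def power2_eq_square algebra_simps elim!: evenE)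
  qed auto
  also have "\<dots> = (\<Sum>p\<in>norm_reps (int M). (if even (snd p) then 1 - alt_sign (fst p) else 0))"
    by (rule sum.inter_filter[OF norm_reps_finite])
  finally show ?thesis .
qed

(* j^2 + j + 11 (k^2 + k) + 3 = a^2 + a b + 3 b^2 for (a, b) = (j - k, 2k + 1). *)
lemma psi_product_nth:
  "(fps_X^3 * (psi_series * fps_dilate 11 psi_series)) $ M
     = (\<Sum>p\<in>norm_reps (int M). (if odd (snd p) then 1 else 0))"
proof -
  let ?D = "{p. (fst p)^2 + fst p + 11 * ((snd p)^2 + snd p) = int M - 3}"
  have "(fps_X^3 * (psi_series * fps_dilate 11 psi_series)) $ M = (\<Sum>p\<in>?D. 1)"
  proof (cases "M < 3")
    case True
    have nonneg: "0 \<le> x^2 + x" for x :: int using theta_exponent_bounds(2)[of 1 1 x] by simp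
    have "p \<notin> ?D" for p using nonneg[of "fst p"] nonneg[of "snd p"] True by auto
    then have "?D = {}" by blast
    then show ?thesis using True by (simp add: fps_X_power_mult_nth)
  next
    case False
    then show ?thesis
      using theta_product_nth[of 1 1 1 1 11 "\<lambda>_. 1" "\<lambda>_. 1" "M - 3"]
      by (simp add: fps_X_power_mult_nth psi_series_def of_nat_diff)
  qed
  also have "\<dots> = (\<Sum>p\<in>{p\<in>norm_reps (int M). odd (snd p)}. 1)"
  proof (rule sum.reindex_bij_witness[of _ "\<lambda>q. (fst q + snd q div 2, snd q div 2)"
                                            "\<lambda>p. (fst p - snd p, 2 * snd p + 1)"])
    fix p assume "p \<in> ?D"
    then show "(fst p - snd p, 2 * snd p + 1) \<in> {p\<in>norm_reps (int M). odd (snd p)}"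
      by (cases p) (simp add: norm_reps_def power2_eq_square algebra_simps)
  next
    fix q assume "q \<in> {p\<in>norm_reps (int M). odd (snd p)}"
    then show "(fst q + snd q div 2, snd q div 2) \<in> ?D"
      by (cases q) (auto simp: norm_reps_def power2_eq_square algebra_simps elim!: oddE)
  qed auto
  also have "\<dots> = (\<Sum>p\<in>norm_reps (int M). (if odd (snd p) then 1 else 0))"
    by (rule sum.inter_filter[OF norm_reps_finite])
  finally show ?thesis .
qed

(* 3 j^2 + j + 11 (3 k^2 + k) + 1 = a^2 + a b + 3 b^2 for (a, b) = (6k + 1, j - k). *)
lemma pent_product_nth:
  "(fps_const 4 * fps_X * (theta 3 1 alt_sign * fps_dilate 11 (theta 3 1 alt_sign))) $ M
     = 4 * (\<Sum>p\<in>norm_reps (int M). (if fst p mod 6 = 1 then alt_sign (snd p) else 0))"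
proof -
  let ?D = "{p. 3 * (fst p)^2 + fst p + 11 * (3 * (snd p)^2 + snd p) = int M - 1}"
  have "(fps_const 4 * fps_X * (theta 3 1 alt_sign * fps_dilate 11 (theta 3 1 alt_sign))) $ M
          = 4 * (\<Sum>p\<in>?D. alt_sign (fst p) * alt_sign (snd p))"
  proof (cases "M = 0")
    case True
    have nonneg: "0 \<le> 3 * x^2 + x" for x :: int using theta_exponent_bounds(2)[of 3 1 x] by simp
    have "p \<notin> ?D" for p using nonneg[of "fst p"] nonneg[of "snd p"] True by auto
    then have "?D = {}" by blast
    then show ?thesis using True by (simp add: mult.assoc)
  next
    case False
    then show ?thesis
      using theta_product_nth[of 3 1 3 1 11 alt_sign alt_sign "M - 1"]
      by (simp add: mult.assoc fps_X_mult_nth of_nat_diff algebra_simps)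
  qed
  also have "(\<Sum>p\<in>?D. alt_sign (fst p) * alt_sign (snd p))
               = (\<Sum>p\<in>{p\<in>norm_reps (int M). fst p mod 6 = 1}. alt_sign (snd p))"
  proof (rule sum.reindex_bij_witness[of _ "\<lambda>q. (snd q + fst q div 6, fst q div 6)"
                                            "\<lambda>p. (6 * snd p + 1, fst p - snd p)"])
    fix p assume "p \<in> ?D"
    then show "(6 * snd p + 1, fst p - snd p) \<in> {p\<in>norm_reps (int M). fst p mod 6 = 1}"
      by (cases p) (simp add: norm_reps_def power2_eq_square algebra_simps)
    show "alt_sign (snd (6 * snd p + 1, fst p - snd p)) = alt_sign (fst p) * alt_sign (snd p)"
      by (simp add: alt_sign_diff)
  next
    fix q assume q: "q \<in> {p\<in>norm_reps (int M). fst p mod 6 = 1}"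
    then have "fst q mod 6 = 1" by simp
    then obtain t where t: "fst q = 6 * t + 1" by (metis div_mult_mod_eq add.commute mult.commute)
    obtain a b where qe: "q = (a, b)" by (cases q)
    show "(snd q + fst q div 6, fst q div 6) \<in> ?D"
      using q qe t by (simp add: norm_reps_def power2_eq_square algebra_simps)
    show "(6 * snd (snd q + fst q div 6, fst q div 6) + 1,
        fst (snd q + fst q div 6, fst q div 6) - snd (snd q + fst q div 6, fst q div 6)) = q"
      using qe t by simp
  qed auto
  also have "\<dots> = (\<Sum>p\<in>norm_reps (int M). (if fst p mod 6 = 1 then alt_sign (snd p) else 0))"
    by (rule sum.inter_filter[OF norm_reps_finite])
  finally show ?thesis .
qed

theorem lattice_identity:
  "phi_plus * fps_dilate 11 phi_plus - phi_minus * fps_dilate 11 phi_minus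
     - fps_X^3 * (psi_series * fps_dilate 11 psi_series)
   = fps_const 4 * fps_X * (theta 3 1 alt_sign * fps_dilate 11 (theta 3 1 alt_sign))"
proof (rule fps_ext)
  fix M
  have "(phi_plus * fps_dilate 11 phi_plus - phi_minus * fps_dilate 11 phi_minus
          - fps_X^3 * (psi_series * fps_dilate 11 psi_series)) $ M
        = (phi_plus * fps_dilate 11 phi_plus - phi_minus * fps_dilate 11 phi_minus) $ M
          - (fps_X^3 * (psi_series * fps_dilate 11 psi_series)) $ M"
    by (rule fps_sub_nth)
  then show "(phi_plus * fps_dilate 11 phi_plus - phi_minus * fps_dilate 11 phi_minus
          - fps_X^3 * (psi_series * fps_dilate 11 psi_series)) $ M
        = (fps_const 4 * fps_X * (theta 3 1 alt_sign * fps_dilate 11 (theta 3 1 alt_sign))) $ M"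
    by (simp only: phi_products_nth psi_product_nth pent_product_nth norm_reps_identity)
qed

section \<open>The generating functions of S and T\<close>

lemma gen_prod_distinct_parts_nth:
  assumes "admissible M fst"
  shows "gen_prod M fst (\<lambda>_. c) $ N = (\<Sum>P\<in>distinct_parts M N. c ^ card P)"
  unfolding gen_prod_nth[OF assms] distinct_parts_def by simp

lemma distinct_parts_finite:
  assumes "admissible M fst"
  shows "finite (distinct_parts M N)"
proof (rule finite_subset)
  show "distinct_parts M N \<subseteq> Pow {u\<in>M. fst u \<le> N}"
    using member_le_sum[of _ _ fst] by (fastforce simp: distinct_parts_def)
  show "finite (Pow {u\<in>M. fst u \<le> N})" using admissible_finite[OF assms] by simp
qed

(* The two additional copies of 11 n. *)
definition extra_copy :: "nat \<times> nat \<Rightarrow> nat \<times> nat" where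
  "extra_copy u = (11 * fst u, snd u + 2)"

lemma admissible_extra_copies:
  assumes adm: "admissible U fst"
  shows "admissible (extra_copy ` U) fst"
  unfolding admissible_def
proof (intro conjI ballI allI)
  fix v assume "v \<in> extra_copy ` U"
  then show "0 < fst v" using adm by (auto simp: admissible_def extra_copy_def)
next
  fix n
  have "{v \<in> extra_copy ` U. fst v \<le> n} \<subseteq> extra_copy ` {u\<in>U. fst u \<le> n}"
    by (auto simp: extra_copy_def)
  moreover have "finite (extra_copy ` {u\<in>U. fst u \<le> n})" using admissible_finite[OF adm] by simp
  ultimately show "finite {v \<in> extra_copy ` U. fst v \<le> n}" by (rule finite_subset)
qed

lemma gen_prod_extra_copies:
  assumes adm: "admissible U fst" and U: "U \<subseteq> {u. snd u < 2}"
  shows "gen_prod (U \<union> extra_copy ` U) fst (\<lambda>_. c) = gen_prod U fst (\<lambda>_. c) * fps_dilate 11 (gen_prod U fst (\<lambda>_. c))"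
proof -
  have "gen_prod (extra_copy ` U) fst (\<lambda>_. c) = gen_prod U (\<lambda>u. 11 * fst u) (\<lambda>_. c)"
    by (rule gen_prod_reindex[of extra_copy]) (auto simp: bij_betw_def extra_copy_def inj_on_def)
  also have "\<dots> = fps_dilate 11 (gen_prod U fst (\<lambda>_. c))" by (rule gen_prod_scale[OF adm]) simp
  finally have "gen_prod (extra_copy ` U) fst (\<lambda>_. c) = fps_dilate 11 (gen_prod U fst (\<lambda>_. c))" .
  moreover have "U \<inter> extra_copy ` U = {}" using U by (auto simp: extra_copy_def)
  then have "gen_prod (U \<union> extra_copy ` U) fst (\<lambda>_. c)
               = gen_prod U fst (\<lambda>_. c) * gen_prod (extra_copy ` U) fst (\<lambda>_. c)"
    by (rule gen_prod_Un[OF adm admissible_extra_copies[OF adm]])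
  ultimately show ?thesis by simp
qed

lemma S_elems_split: "S_elems = signed_odds \<union> extra_copy ` signed_odds"
proof (intro set_eqI iffI)
  fix u assume u: "u \<in> S_elems"
  obtain n c where ue: "u = (n, c)" by (cases u)
  have n: "odd n" and c: "c < (if 11 dvd n then 4 else 2)" using u ue by (auto simp: S_elems_def)
  show "u \<in> signed_odds \<union> extra_copy ` signed_odds"
  proof (cases "c < 2")
    case True then show ?thesis using ue n by (simp add: signed_odds_def)
  next
    case False
    then obtain m where m: "n = 11 * m" "c < 4" using c by (auto split: if_splits)
    then have "(m, c - 2) \<in> signed_odds" "u = extra_copy (m, c - 2)"
      using n ue False by (auto simp: signed_odds_def extra_copy_def)
    then show ?thesis by blast
  qed
qed (auto simp: signed_odds_def S_elems_def extra_copy_def odd_pos)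

definition even_pairs :: "(nat \<times> nat) set" where
  "even_pairs = {(n, c). even n \<and> 0 < n \<and> c < 2}"

lemma T_elems_split: "T_elems = even_pairs \<union> extra_copy ` even_pairs"
proof (intro set_eqI iffI)
  fix u assume u: "u \<in> T_elems"
  obtain n c where ue: "u = (n, c)" by (cases u)
  have n: "even n" "0 < n" and c: "c < (if 11 dvd n then 4 else 2)" using u ue by (auto simp: T_elems_def)
  show "u \<in> even_pairs \<union> extra_copy ` even_pairs"
  proof (cases "c < 2")
    case True then show ?thesis using ue n by (simp add: even_pairs_def)
  next
    case False
    then obtain m where m: "n = 11 * m" "c < 4" using c by (auto split: if_splits)
    then have "(m, c - 2) \<in> even_pairs" "u = extra_copy (m, c - 2)"
      using n ue False by (auto simp: even_pairs_def extra_copy_def)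
    then show ?thesis by blast
  qed
qed (auto simp: even_pairs_def T_elems_def extra_copy_def)

lemma admissible_signed_odds: "admissible signed_odds fst"
  using admissible_part_degree[of 1 0, unfolded part_degree_1_0] by simp

lemma admissible_even_pairs: "admissible even_pairs fst"
  unfolding admissible_def even_pairs_def
  by (auto intro: finite_subset[of _ "{0..n} \<times> {0..1}" for n])

(* (n,+) \<mapsto> n + 1 and (n,-) \<mapsto> n - 1 maps the signed odd parts other than (1,-) onto two
   copies of the even numbers; these are exactly the degrees for a = b = 1. *)
definition odd_to_even :: "nat \<times> nat \<Rightarrow> nat \<times> nat" where
  "odd_to_even u = (if snd u = 0 then (fst u + 1, 0) else (fst u - 1, 1))"

definition even_to_odd :: "nat \<times> nat \<Rightarrow> nat \<times> nat" where
  "even_to_odd u = (if snd u = 0 then (fst u - 1, 0) else (fst u + 1, 1))"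

lemma bij_odd_to_even: "bij_betw odd_to_even (signed_odds - {(1,1)}) even_pairs"
proof (rule bij_betw_byWitness[where f' = even_to_odd])
  have odd: "odd n \<and> (c = 0 \<or> (c = 1 \<and> 3 \<le> n))" if "(n, c) \<in> signed_odds - {(1,1)}" for n c
  proof -
    have "odd n" "c = 0 \<or> c = 1" "c = 1 \<longrightarrow> n \<noteq> 1" using that by (auto simp: signed_odds_iff)
    then show ?thesis by presburger
  qed
  have even: "even n \<and> 2 \<le> n \<and> (c = 0 \<or> c = 1)" if "(n, c) \<in> even_pairs" for n c
    using that by (auto simp: even_pairs_def elim!: evenE)
  show "\<forall>u\<in>signed_odds - {(1,1)}. even_to_odd (odd_to_even u) = u"
    using odd by (force simp: odd_to_even_def even_to_odd_def)
  show "\<forall>u\<in>even_pairs. odd_to_even (even_to_odd u) = u"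
    using even by (force simp: odd_to_even_def even_to_odd_def)
  show "odd_to_even ` (signed_odds - {(1,1)}) \<subseteq> even_pairs"
    using odd by (force simp: odd_to_even_def even_pairs_def)
  show "even_to_odd ` even_pairs \<subseteq> signed_odds - {(1,1)}"
    using even by (force simp: even_to_odd_def signed_odds_iff)
qed

lemma part_degree_1_1: "part_degree 1 1 u = fst (odd_to_even u)"
  by (simp add: part_degree_def odd_to_even_def)

(* The part (1,-) has degree 0 for a = b = 1, so it may be added to any set on a level:
   each level set for a = b = 1 is counted twice. *)
lemma card_level_sets_1_1:
  "card (level_sets 1 1 (int M))
     = 2 * card {P. P \<subseteq> signed_odds - {(1,1)} \<and> finite P \<and> sum (part_degree 1 1) P = M}"
proof -
  let ?A = "{P. P \<subseteq> signed_odds - {(1,1)} \<and> finite P \<and> sum (part_degree 1 1) P = M}"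
  have zero: "part_degree 1 1 (1,1) = 0" by (simp add: part_degree_def)
  have one: "(1,1) \<in> signed_odds" by (simp add: signed_odds_iff)
  have split: "level_sets 1 1 (int M) = ?A \<union> insert (1,1) ` ?A"
  proof (intro set_eqI iffI)
    fix P assume "P \<in> level_sets 1 1 (int M)"
    then have P: "P \<subseteq> signed_odds" "finite P" "sum (part_degree 1 1) P = M"
      by (auto simp: level_sets_eq)
    show "P \<in> ?A \<union> insert (1,1) ` ?A"
    proof (cases "(1,1) \<in> P")
      case True
      then have "P = insert (1,1) (P - {(1,1)})" by blast
      moreover have "sum (part_degree 1 1) (P - {(1,1)}) = M"
        using sum.remove[OF P(2) True, of "part_degree 1 1"] P(3) zero by simp
      ultimately show ?thesis using P by blast
    qed (use P in blast)
  next
    fix P assume "P \<in> ?A \<union> insert (1,1) ` ?A"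
    then show "P \<in> level_sets 1 1 (int M)"
      using one zero by (auto simp: level_sets_eq sum.insert_if)
  qed
  have fin: "finite ?A"
    using level_sets_finite[of 1 1 M] split by auto
  have "card (level_sets 1 1 (int M)) = card ?A + card (insert (1,1) ` ?A)"
    unfolding split by (rule card_Un_disjoint) (use fin in auto)
  also have "card (insert (1,1) ` ?A) = card ?A"
  proof (rule card_image, rule inj_onI)
    fix P Q assume PQ: "P \<in> ?A" "Q \<in> ?A" and eq: "insert (1,1) P = insert (1,1) Q"
    have "(1,1) \<notin> P" "(1,1) \<notin> Q" using PQ by auto
    then have "P = insert (1,1) P - {(1,1)}" by simp
    also have "\<dots> = insert (1,1) Q - {(1,1)}" by (simp only: eq)
    also have "\<dots> = Q" using \<open>(1,1) \<notin> Q\<close> by simp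
    finally show "P = Q" .
  qed
  finally show ?thesis by simp
qed

lemma even_pairs_psi: "fps_const 2 * gen_prod even_pairs fst (\<lambda>_. 1) = psi_series * balanced_gf"
proof (rule fps_ext)
  fix M
  have adm: "admissible (signed_odds - {(1,1)}) (part_degree 1 1)"
    by (rule admissible_reindex[OF bij_odd_to_even part_degree_1_1 admissible_even_pairs])
  have "gen_prod even_pairs fst (\<lambda>_. 1) = gen_prod (signed_odds - {(1,1)}) (part_degree 1 1) (\<lambda>_. 1)"
    by (rule gen_prod_reindex[OF bij_odd_to_even, where v = "part_degree 1 1"])
       (simp_all only: part_degree_1_1)
  then have "gen_prod even_pairs fst (\<lambda>_. 1) $ M
               = (\<Sum>P\<in>{P. P \<subseteq> signed_odds - {(1,1)} \<and> finite P \<and> sum (part_degree 1 1) P = M}. prod (\<lambda>_. 1) P)"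
    using gen_prod_nth[OF adm] by (rule ssubst)
  then have "gen_prod even_pairs fst (\<lambda>_. 1) $ M
               = of_nat (card {P. P \<subseteq> signed_odds - {(1,1)} \<and> finite P \<and> sum (part_degree 1 1) P = M})"
    by simp
  moreover have "(psi_series * balanced_gf) $ M = of_nat (card (level_sets 1 1 (int M)))"
    using level_sets_charge_sum[of 1 1 "\<lambda>_. 1" M] by (simp add: psi_series_def)
  ultimately show "(fps_const 2 * gen_prod even_pairs fst (\<lambda>_. 1)) $ M = (psi_series * balanced_gf) $ M"
    using card_level_sets_1_1[of M] by simp
qed

definition gf_S :: "complex \<Rightarrow> complex fps" where
  "gf_S c = gen_prod S_elems fst (\<lambda>_. c)"

definition gf_T :: "complex fps" where
  "gf_T = gen_prod T_elems fst (\<lambda>_. 1)"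

lemma gf_S_factor:
  "gf_S c = gen_prod signed_odds fst (\<lambda>_. c) * fps_dilate 11 (gen_prod signed_odds fst (\<lambda>_. c))"
  unfolding gf_S_def S_elems_split
  by (rule gen_prod_extra_copies[OF admissible_signed_odds]) (auto simp: signed_odds_def)

lemma gf_T_factor:
  "fps_const 4 * gf_T = (psi_series * balanced_gf) * fps_dilate 11 (psi_series * balanced_gf)"
proof -
  let ?E = "gen_prod even_pairs fst (\<lambda>_. 1)"
  have "gf_T = ?E * fps_dilate 11 ?E"
    unfolding gf_T_def T_elems_split
    by (rule gen_prod_extra_copies[OF admissible_even_pairs]) (auto simp: even_pairs_def)
  moreover have "fps_const (4::complex) = fps_const 2 * fps_const 2" by simp
  ultimately have "fps_const 4 * gf_T = (fps_const 2 * ?E) * (fps_const 2 * fps_dilate 11 ?E)"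
    by (simp only: mult_ac)
  also have "fps_const 2 * fps_dilate 11 ?E = fps_dilate 11 (fps_const 2 * ?E)"
    by (simp add: fps_dilate_const_mult)
  finally show ?thesis by (simp only: even_pairs_psi)
qed

(* For c = \<plusminus>1 the charge weights are constant, so the triple product applies. *)
lemma signed_odds_phi:
  "gen_prod signed_odds fst (\<lambda>_. 1) = phi_plus * balanced_gf"
  "gen_prod signed_odds fst (\<lambda>_. -1) = phi_minus * balanced_gf"
proof -
  have "gen_prod signed_odds fst (\<lambda>_. c) = gen_prod signed_odds fst (charge_weight c)"
    if "inverse c = c" for c
    by (rule gen_prod_cong) (simp add: charge_weight_def that)
  then show "gen_prod signed_odds fst (\<lambda>_. 1) = phi_plus * balanced_gf"
    "gen_prod signed_odds fst (\<lambda>_. -1) = phi_minus * balanced_gf"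
    using triple_product_1_0[of 1] triple_product_1_0[of "-1"]
    by (simp_all add: phi_plus_def phi_minus_def neg_one_powi)
qed

theorem main_identity: "gf_S 1 - gf_S (-1) - fps_const 4 * fps_X^3 * gf_T = fps_const 4 * fps_X"
proof -
  let ?G = "balanced_gf * fps_dilate 11 balanced_gf"
  have "gf_S 1 - gf_S (-1) - fps_const 4 * fps_X^3 * gf_T
          = gf_S 1 - gf_S (-1) - fps_X^3 * (fps_const 4 * gf_T)"
    by (simp only: mult_ac)
  also have "\<dots> = (phi_plus * fps_dilate 11 phi_plus - phi_minus * fps_dilate 11 phi_minus
                    - fps_X^3 * (psi_series * fps_dilate 11 psi_series)) * ?G"
    unfolding gf_S_factor gf_T_factor signed_odds_phi by (simp add: fps_dilate_mult algebra_simps)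
  also have "\<dots> = fps_const 4 * fps_X * ((euler_even * balanced_gf) * fps_dilate 11 (euler_even * balanced_gf))"
    unfolding lattice_identity euler_even_pentagonal[symmetric] by (simp add: fps_dilate_mult mult_ac)
  also have "\<dots> = fps_const 4 * fps_X"
    using balanced_gf_euler_even by (simp add: mult.commute fps_dilate_one)
  finally show ?thesis .
qed

lemma gf_S_nth: "(gf_S 1 - gf_S (-1)) $ N = 2 * of_nat (D_S N)"
proof -
  let ?A = "distinct_parts S_elems N"
  have adm: "admissible S_elems fst"
    unfolding S_elems_split by (intro admissible_Un admissible_signed_odds admissible_extra_copies)
  have "(gf_S 1 - gf_S (-1)) $ N = (\<Sum>P\<in>?A. 1 - (-1) ^ card P)"
    by (simp add: gf_S_def gen_prod_distinct_parts_nth[OF adm] sum_subtractf)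
  also have "\<dots> = (\<Sum>P\<in>?A. if odd (card P) then 2 else 0)"
    by (rule sum.cong) auto
  also have "\<dots> = (\<Sum>P\<in>{P\<in>?A. odd (card P)}. 2)"
    by (rule sum.inter_filter[symmetric]) (rule distinct_parts_finite[OF adm])
  finally show ?thesis by (simp add: D_S_def)
qed

lemma gf_T_nth: "gf_T $ N = of_nat (D_T N)"
proof -
  have adm: "admissible T_elems fst"
    unfolding T_elems_split by (intro admissible_Un admissible_even_pairs admissible_extra_copies)
  show ?thesis by (simp add: gf_T_def gen_prod_distinct_parts_nth[OF adm] D_T_def)
qed

theorem theorem3p13:
  fixes N :: nat
  assumes "N \<ge> 3"
  shows "D_S N = 2 * D_T (N - 3)"
proof -
  have "(gf_S 1 - gf_S (-1)) $ N - (fps_const 4 * fps_X^3 * gf_T) $ N = (fps_const 4 * fps_X) $ N"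
    using main_identity fps_sub_nth[of "gf_S 1 - gf_S (-1)"] by metis
  moreover have "(fps_const 4 * fps_X^3 * gf_T) $ N = 4 * of_nat (D_T (N - 3))"
    using assms by (simp add: mult.assoc fps_X_power_mult_nth gf_T_nth)
  ultimately have "2 * of_nat (D_S N) - 4 * of_nat (D_T (N - 3)) = (0::complex)"
    using assms unfolding gf_S_nth by simp
  then have "of_nat (2 * D_S N) = (of_nat (4 * D_T (N - 3)) :: complex)" by simp
  then show ?thesis by (simp only: of_nat_eq_iff)
qed

end
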